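(* For all integers $n>k\ge1$, the set $C_{n,k}=\{\pi\in\mathfrak{S}_n:\ |\mathrm{cDes}(\pi^{-1})|=k\}$ is cyclic Schur-positive.
   Context: For $\pi\in\mathfrak{S}_n$ (one-line notation), $\mathrm{Des}(\pi)=\{i\in[n-1]:\pi(i)>\pi(i+1)\}$ and $\mathrm{cDes}(\pi)=\{i\in[n]:\pi(i)>\pi(i+1)\}$ with $\pi(n+1):=\pi(1)$. $\mathbf{x}^J=\prod_{i\in J}x_i$; $i+J=\{i+j\bmod n:j\in J\}\subseteq[n]$. Cyclic Schur-positive: for a skew shape $\lambda/\mu$ with $n$ cells, $\mathrm{Des}(T)$ for $T\in\mathrm{SYT}(\lambda/\mu)$ is the set of $i\in[n-1]$ with $i+1$ in a strictly lower row than $i$. A cyclic descent extension on $\mathrm{SYT}(\lambda/\mu)$ is a pair $(\mathrm{cDes},\psi)$, $\psi$ a bijection, with $\mathrm{cDes}(T)\cap[n-1]=\mathrm{Des}(T)$, $\mathrm{cDes}(\psi T)=1+\mathrm{cDes}(T)$, $\emptyset\ne\mathrm{cDes}(T)\ne[n]$; it exists iff $\lambda/\mu$ is not a connected ribbon, and $\sum_T\mathbf{x}^{\mathrm{cDes}(T)}$ is then independent of the choice. $A\subseteq\mathfrak{S}_n$ is cyclic Schur-positive if $\sum_{\pi\in A}\mathbf{x}^{\mathrm{cDes}(\pi)}=\sum m_{\lambda/\mu}\sum_{T\in\mathrm{SYT}(\lambda/\mu)}\mathbf{x}^{\mathrm{cDes}(T)}$ for some nonnegative integers $m_{\lambda/\mu}$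 indexed by skew shapes with $n$ cells that are not connected ribbons. *)

theory Defs
  imports "HOL-Combinatorics.Permutations" "HOL-Library.Multiset"
begin

(* cyclic successor on [n] = {1..n}: i \<mapsto> i+1, n \<mapsto> 1 *)
definition csucc :: "nat \<Rightarrow> nat \<Rightarrow> nat" where
  "csucc n i = i mod n + 1"

definition perm_cDes :: "nat \<Rightarrow> (nat \<Rightarrow> nat) \<Rightarrow> nat set" where
  "perm_cDes n \<pi> = {i \<in> {1..n}. \<pi> i > \<pi> (csucc n i)}"

definition cshift :: "nat \<Rightarrow> nat set \<Rightarrow> nat set" where
  "cshift n J = csucc n ` J"

definition C_set :: "nat \<Rightarrow> nat \<Rightarrow> (nat \<Rightarrow> nat) set" where
  "C_set n k = {\<pi>. \<pi> permutes {1..n} \<and> card (perm_cDes n (inv \<pi>)) = k}"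

(* ---------- Skew shapes (English notation, 0-indexed cells (row, column)) ---------- *)

definition is_partition :: "nat list \<Rightarrow> bool" where
  "is_partition p \<longleftrightarrow> sorted_wrt (\<ge>) p \<and> (\<forall>x \<in> set p. 0 < x)"

definition part_at :: "nat list \<Rightarrow> nat \<Rightarrow> nat" where
  "part_at p i = (if i < length p then p ! i else 0)"

definition skew_shape :: "nat list \<Rightarrow> nat list \<Rightarrow> bool" where
  "skew_shape lam mu \<longleftrightarrow> is_partition lam \<and> is_partition mu \<and>
     length mu \<le> length lam \<and> (\<forall>i < length mu. mu ! i \<le> lam ! i)"

definition cells :: "nat list \<Rightarrow> nat list \<Rightarrow> (nat \<times> nat) set" where
  "cells lam mu = {(i, j). i < length lam \<and> part_at mu i \<le> j \<and> j < part_at lam i}"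

definition adjacent :: "nat \<times> nat \<Rightarrow> nat \<times> nat \<Rightarrow> bool" where
  "adjacent c d \<longleftrightarrow> (fst c = fst d \<and> (snd d = snd c + 1 \<or> snd c = snd d + 1)) \<or>
                     (snd c = snd d \<and> (fst d = fst c + 1 \<or> fst c = fst d + 1))"

definition connected_ribbon :: "nat list \<Rightarrow> nat list \<Rightarrow> bool" where
  "connected_ribbon lam mu \<longleftrightarrow>
     (\<forall>c \<in> cells lam mu. \<forall>d \<in> cells lam mu.
        (\<lambda>x y. x \<in> cells lam mu \<and> y \<in> cells lam mu \<and> adjacent x y)\<^sup>*\<^sup>* c d) \<and>
     \<not> (\<exists>i j. {(i, j), (i + 1, j), (i, j + 1), (i + 1, j + 1)} \<subseteq> cells lam mu)"

definition SYT :: "nat list \<Rightarrow> nat list \<Rightarrow> ((nat \<times> nat) \<Rightarrow> nat) set" where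
  "SYT lam mu = {T. bij_betw T (cells lam mu) {1..card (cells lam mu)} \<and>
      (\<forall>c \<in> cells lam mu. \<forall>d \<in> cells lam mu.
          (fst c = fst d \<and> snd c < snd d \<longrightarrow> T c < T d) \<and>
          (snd c = snd d \<and> fst c < fst d \<longrightarrow> T c < T d)) \<and>
      (\<forall>c. c \<notin> cells lam mu \<longrightarrow> T c = 0)}"

definition tab_Des :: "nat list \<Rightarrow> nat list \<Rightarrow> ((nat \<times> nat) \<Rightarrow> nat) \<Rightarrow> nat set" where
  "tab_Des lam mu T = {i \<in> {1..card (cells lam mu) - 1}.
      \<exists>c \<in> cells lam mu. \<exists>d \<in> cells lam mu. T c = i \<and> T d = i + 1 \<and> fst c < fst d}"

definition cyclic_descent_ext ::
  "nat \<Rightarrow> 'a set \<Rightarrow> ('a \<Rightarrow> nat set) \<Rightarrow> ('a \<Rightarrow> nat set) \<Rightarrow> ('a \<Rightarrow> 'a) \<Rightarrow> bool" where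
  "cyclic_descent_ext n X Des cD \<psi> \<longleftrightarrow> bij_betw \<psi> X X \<and>
     (\<forall>T \<in> X. cD T \<subseteq> {1..n} \<and> cD T \<inter> {1..n-1} = Des T \<and>
               cD (\<psi> T) = cshift n (cD T) \<and> cD T \<noteq> {} \<and> cD T \<noteq> {1..n})"

(* A is cyclic Schur-positive: the formal sum of x^{cDes(pi)} (a multiset of subsets of [n])
   equals a nonnegative integer combination (the multiset `shapes' records multiplicities)
   of the sums of x^{cDes(T)} over SYT of skew shapes with n cells that are not connected
   ribbons, for cyclic descent extensions on them *)
definition cyclic_Schur_positive :: "nat \<Rightarrow> (nat \<Rightarrow> nat) set \<Rightarrow> bool" where
  "cyclic_Schur_positive n A \<longleftrightarrow>
    (\<exists>shapes :: (nat list \<times> nat list) multiset.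
     \<exists>cD :: nat list \<times> nat list \<Rightarrow> ((nat \<times> nat) \<Rightarrow> nat) \<Rightarrow> nat set.
       (\<forall>s \<in># shapes. skew_shape (fst s) (snd s) \<and> card (cells (fst s) (snd s)) = n \<and>
           \<not> connected_ribbon (fst s) (snd s) \<and>
           (\<exists>\<psi>. cyclic_descent_ext n (SYT (fst s) (snd s)) (tab_Des (fst s) (snd s)) (cD s) \<psi>)) \<and>
       image_mset (perm_cDes n) (mset_set A) =
         (\<Sum>s \<in># shapes. image_mset (cD s) (mset_set (SYT (fst s) (snd s)))))"

end

theory Submission
  imports Defs
begin

text \<open>Write \<open>\<sigma> = \<pi>\<^sup>-\<^sup>1\<close>. Rotating the values of \<open>\<sigma>\<close> cyclically so that \<open>\<sigma>(n)\<close> becomes \<open>n\<close> does not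
  change the number of cyclic descents, which is then one more than the number of descents \<open>S\<close>
  of the first \<open>n - 1\<close> letters. This splits \<open>C\<^sub>n\<^sub>,\<^sub>k\<close> into classes indexed by the sets \<open>S\<close> with
  \<open>k - 1\<close> elements. Each class is closed under the cyclic shift of values, which shifts
  \<open>cDes(\<sigma>\<^sup>-\<^sup>1)\<close> cyclically, so its multiset of cyclic descent sets is rotation invariant. Restricted
  to \<open>[n - 1]\<close> it becomes the distribution of inverse descent sets, which agrees with that on the
  permutations whose first \<open>n - 1\<close> letters have descent set exactly \<open>S\<close>: after inclusion-exclusion
  over \<open>S\<close>, both sides are counted by standardising within blocks. The latter permutations
  are the standard Young tableaux of a ribbon with an extra isolated cell, descents becoming
  inverse descents. As this shape is not a connected ribbon, a rotation invariant multiset with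
  the right restriction is the cyclic descent distribution of a cyclic descent extension.\<close>

section \<open>Multisets of images\<close>

lemma bij_betw_fun_upd_insert:
  assumes "bij_betw f A B" "x \<notin> A" "y \<notin> B"
  shows "bij_betw (f(x := y)) (insert x A) (insert y B)"
proof -
  have "(f(x := y)) ` A = f ` A" using assms(2) by (auto simp: image_def)
  moreover have "inj_on (f(x := y)) A" using assms(1,2) unfolding bij_betw_def inj_on_def by auto
  ultimately show ?thesis using assms unfolding bij_betw_def by (auto simp: inj_on_insert)
qed

lemma image_mset_eq_imp_bij_betw:
  assumes "finite X" "finite Y" "image_mset f (mset_set X) = image_mset g (mset_set Y)"
  obtains \<psi> where "bij_betw \<psi> X Y" "\<And>x. x \<in> X \<Longrightarrow> g (\<psi> x) = f x"
proof -
  have "\<exists>\<psi>. bij_betw \<psi> X Y \<and> (\<forall>x\<in>X. g (\<psi> x) = f x)"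
    using assms
  proof (induction X arbitrary: Y rule: finite_induct)
    case empty
    then have "Y = {}" by (metis image_mset_is_empty_iff mset_set_empty_iff)
    then show ?case by (intro exI[of _ "\<lambda>_. undefined"]) (simp add: bij_betw_def)
  next
    case (insert x X)
    have "f x \<in># image_mset g (mset_set Y)"
      using insert.prems(2) insert.hyps by (metis image_mset_add_mset mset_set.insert(1) union_single_eq_member)
    then obtain y where y: "y \<in> Y" "g y = f x" using insert.prems(1) by auto
    have "image_mset g (mset_set (Y - {y})) = image_mset g (mset_set Y) - {#g y#}"
      using y insert.prems(1) by (simp add: mset_set_Diff image_mset_Diff)
    also have "\<dots> = image_mset f (mset_set X)"
      using insert.prems(2) insert.hyps y by (metis add_mset_remove_trivial image_mset_add_mset mset_set.insert(1))
    finally obtain \<psi> where \<psi>: "bij_betw \<psi> X (Y - {y})" "\<forall>x\<in>X. g (\<psi> x) = f x"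
      using insert.IH[of "Y - {y}"] insert.prems(1) by auto
    have "bij_betw (\<psi>(x := y)) (insert x X) (insert y (Y - {y}))"
      using \<psi>(1) insert.hyps by (intro bij_betw_fun_upd_insert) auto
    moreover have "insert y (Y - {y}) = Y" using y by auto
    moreover have "\<forall>z\<in>insert x X. g ((\<psi>(x := y)) z) = f z" using \<psi>(2) y insert.hyps by auto
    ultimately show ?case by auto
  qed
  then show thesis using that by blast
qed

lemma image_mset_sum: "image_mset g (sum F A) = (\<Sum>a\<in>A. image_mset g (F a))"
  by (induction A rule: infinite_finite_induct) auto

lemma image_mset_mset_set_inj_on_comp:
  assumes "finite A" "inj_on b A" "\<And>x. x \<in> A \<Longrightarrow> G x = W (b x)"
  shows "image_mset G (mset_set A) = image_mset W (mset_set (b ` A))"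
proof -
  have "image_mset G (mset_set A) = image_mset (W \<circ> b) (mset_set A)"
    by (rule image_mset_cong) (use assms in auto)
  also have "\<dots> = image_mset W (mset_set (b ` A))"
    by (simp add: multiset.map_comp[symmetric] image_mset_mset_set[OF assms(2)])
  finally show ?thesis .
qed

lemma mset_set_eq_sum_fibers:
  assumes "finite A" "finite I" "\<And>x. x \<in> A \<Longrightarrow> D x \<in> I"
  shows "mset_set A = (\<Sum>i\<in>I. mset_set {x \<in> A. D x = i})"
proof (rule multiset_eqI)
  fix y
  have "count (\<Sum>i\<in>I. mset_set {x \<in> A. D x = i}) y = (\<Sum>i\<in>I. if D y = i \<and> y \<in> A then 1 else 0)"
    unfolding count_sum by (rule sum.cong) (use assms(1) in \<open>auto simp: count_mset_set'\<close>)
  also have "\<dots> = count (mset_set A) y"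
    using assms by (auto simp: count_mset_set' sum.delta)
  finally show "count (mset_set A) y = count (\<Sum>i\<in>I. mset_set {x \<in> A. D x = i}) y" by simp
qed

lemma eq_if_sum_Pow_eq:
  fixes E1 E2 :: "'a set \<Rightarrow> 'b::cancel_comm_monoid_add"
  assumes U: "finite U" and sums: "\<And>J. J \<subseteq> U \<Longrightarrow> (\<Sum>S\<in>Pow J. E1 S) = (\<Sum>S\<in>Pow J. E2 S)"
    and "S \<subseteq> U"
  shows "E1 S = E2 S"
  using \<open>S \<subseteq> U\<close>
proof (induction "card S" arbitrary: S rule: less_induct)
  case less
  have fS: "finite S" using less.prems U finite_subset by blast
  have "(\<Sum>S'\<in>Pow S - {S}. E1 S') = (\<Sum>S'\<in>Pow S - {S}. E2 S')"
  proof (rule sum.cong[OF refl])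
    fix S' assume "S' \<in> Pow S - {S}"
    then have "S' \<subset> S" by auto
    then show "E1 S' = E2 S'" using less fS psubset_card_mono by (meson order.trans psubset_imp_subset)
  qed
  then show ?case
    using sums[OF less.prems] sum.remove[of "Pow S" S E1] sum.remove[of "Pow S" S E2] fS by simp
qed

section \<open>Cyclic descent extensions from shift-invariant multisets\<close>

lemma cyclic_descent_ext_from_shift_invariant:
  fixes X :: "'a set" and Z :: "'b set" and F :: "'b \<Rightarrow> nat set"
  assumes finX: "finite X" and finZ: "finite Z"
    and shift: "image_mset (cshift n \<circ> F) (mset_set Z) = image_mset F (mset_set Z)"
    and proper: "\<And>z. z \<in> Z \<Longrightarrow> F z \<subseteq> {1..n} \<and> F z \<noteq> {} \<and> F z \<noteq> {1..n}"
    and restr: "image_mset (\<lambda>z. F z \<inter> {1..n-1}) (mset_set Z) = image_mset Des (mset_set X)"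
  shows "\<exists>cD \<psi>. cyclic_descent_ext n X Des cD \<psi> \<and> image_mset cD (mset_set X) = image_mset F (mset_set Z)"
proof -
  obtain \<beta> where \<beta>: "bij_betw \<beta> X Z" "\<And>x. x \<in> X \<Longrightarrow> F (\<beta> x) \<inter> {1..n-1} = Des x"
    using image_mset_eq_imp_bij_betw[OF finX finZ restr[symmetric]] by blast
  define cD where "cD = F \<circ> \<beta>"
  have \<beta>_img: "image_mset \<beta> (mset_set X) = mset_set Z"
    using \<beta>(1) by (simp add: bij_betw_def image_mset_mset_set)
  have cD_img: "image_mset cD (mset_set X) = image_mset F (mset_set Z)"
    unfolding cD_def by (simp only: multiset.map_comp[symmetric] \<beta>_img)
  have "image_mset (cshift n \<circ> cD) (mset_set X) = image_mset cD (mset_set X)"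
    unfolding cD_def using shift \<beta>_img by (simp only: multiset.map_comp[symmetric] comp_assoc[symmetric])
  then obtain \<psi> where \<psi>: "bij_betw \<psi> X X" "\<And>x. x \<in> X \<Longrightarrow> cD (\<psi> x) = cshift n (cD x)"
    using image_mset_eq_imp_bij_betw[OF finX finX] by (metis comp_apply)
  have "cyclic_descent_ext n X Des cD \<psi>"
    unfolding cyclic_descent_ext_def
  proof (intro conjI ballI)
    fix T assume T: "T \<in> X"
    then have "\<beta> T \<in> Z" using \<beta>(1) by (auto simp: bij_betw_def)
    then show "cD T \<subseteq> {1..n}" "cD T \<noteq> {}" "cD T \<noteq> {1..n}" using proper by (auto simp: cD_def)
    show "cD T \<inter> {1..n - 1} = Des T" using \<beta>(2) T by (simp add: cD_def)
    show "cD (\<psi> T) = cshift n (cD T)" using \<psi>(2) T .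
  qed (fact \<psi>(1))
  then show ?thesis using cD_img by blast
qed

lemma cyclic_Schur_positive_sum:
  fixes shape :: "'i \<Rightarrow> nat list \<times> nat list" and M :: "'i \<Rightarrow> nat set multiset"
  assumes "finite I" and "inj_on shape I"
    and shapes: "\<And>i. i \<in> I \<Longrightarrow> skew_shape (fst (shape i)) (snd (shape i)) \<and>
           card (cells (fst (shape i)) (snd (shape i))) = n \<and> \<not> connected_ribbon (fst (shape i)) (snd (shape i))"
    and ext: "\<And>i. i \<in> I \<Longrightarrow> \<exists>cD \<psi>.
           cyclic_descent_ext n (SYT (fst (shape i)) (snd (shape i))) (tab_Des (fst (shape i)) (snd (shape i))) cD \<psi> \<and>
           image_mset cD (mset_set (SYT (fst (shape i)) (snd (shape i)))) = M i"
    and decomp: "image_mset (perm_cDes n) (mset_set A) = (\<Sum>i\<in>I. M i)"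
  shows "cyclic_Schur_positive n A"
proof -
  define good where "good s c \<longleftrightarrow> (\<exists>\<psi>. cyclic_descent_ext n (SYT (fst s) (snd s)) (tab_Des (fst s) (snd s)) c \<psi>)
      \<and> image_mset c (mset_set (SYT (fst s) (snd s))) = M (inv_into I shape s)" for s c
  define cD where "cD s = (SOME c. good s c)" for s
  have cD: "good (shape i) (cD (shape i))" if "i \<in> I" for i
  proof -
    have "\<exists>c. good (shape i) c"
      using ext[OF that] inv_into_f_f[OF \<open>inj_on shape I\<close> that] unfolding good_def by auto
    then show ?thesis unfolding cD_def by (rule someI_ex)
  qed
  show ?thesis unfolding cyclic_Schur_positive_def
  proof (intro exI[of _ "image_mset shape (mset_set I)"] exI[of _ cD] conjI ballI)
    fix s assume "s \<in># image_mset shape (mset_set I)"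
    then obtain i where "i \<in> I" "s = shape i" using \<open>finite I\<close> by auto
    then show "skew_shape (fst s) (snd s)" "card (cells (fst s) (snd s)) = n" "\<not> connected_ribbon (fst s) (snd s)"
        "\<exists>\<psi>. cyclic_descent_ext n (SYT (fst s) (snd s)) (tab_Des (fst s) (snd s)) (cD s) \<psi>"
      using shapes cD unfolding good_def by auto
  next
    have "(\<Sum>i\<in>I. M i) = (\<Sum>i\<in>I. image_mset (cD (shape i)) (mset_set (SYT (fst (shape i)) (snd (shape i)))))"
      by (rule sum.cong[OF refl]) (use cD inv_into_f_f[OF \<open>inj_on shape I\<close>] in \<open>simp add: good_def\<close>)
    also have "\<dots> = (\<Sum>s\<in>#image_mset shape (mset_set I). image_mset (cD s) (mset_set (SYT (fst s) (snd s))))"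
      by (simp add: sum_unfold_sum_mset multiset.map_comp comp_def)
    finally show "image_mset (perm_cDes n) (mset_set A)
        = (\<Sum>s\<in>#image_mset shape (mset_set I). image_mset (cD s) (mset_set (SYT (fst s) (snd s))))"
      using decomp by simp
  qed
qed

section \<open>Permutations increasing on blocks\<close>

lemma permutes_imp_mem: "\<sigma> permutes A \<Longrightarrow> x \<in> A \<Longrightarrow> \<sigma> x \<in> A"
  by (simp add: permutes_in_image)

lemma permutes_inv_imp_mem: "\<sigma> permutes A \<Longrightarrow> x \<in> A \<Longrightarrow> inv \<sigma> x \<in> A"
  by (simp add: permutes_in_image permutes_inv)

lemma less_of_Suc_steps:
  fixes g :: "nat \<Rightarrow> 'a::order"
  assumes "\<And>r. p \<le> r \<Longrightarrow> r < q \<Longrightarrow> g r < g (Suc r)" and "p < q"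
  shows "g p < g q"
proof -
  have "Suc p \<le> q" using \<open>p < q\<close> by simp
  then show ?thesis
  proof (induction rule: dec_induct)
    case base
    show ?case using assms by simp
  next
    case (step r)
    then have "g r < g (Suc r)" using assms(1) by simp
    with step.IH show ?case by (rule less_trans)
  qed
qed

lemma greater_of_Suc_steps:
  fixes g :: "nat \<Rightarrow> 'a::order"
  assumes "\<And>r. p \<le> r \<Longrightarrow> r < q \<Longrightarrow> g (Suc r) < g r" and "p < q"
  shows "g q < g p"
proof -
  have "Suc p \<le> q" using \<open>p < q\<close> by simp
  then show ?thesis
  proof (induction rule: dec_induct)
    case base
    show ?case using assms by simp
  next
    case (step r)
    then have "g (Suc r) < g r" using assms(1) by simp
    then show ?case using step.IH by (rule less_trans)
  qed
qed

text \<open>A set \<open>K\<close> of cuts splits the positions into blocks, a cut \<open>j\<close> separating \<open>j\<close> from \<open>j + 1\<close>;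
  blocks are numbered from \<open>0\<close>.\<close>

definition block_idx :: "nat set \<Rightarrow> nat \<Rightarrow> nat" where
  "block_idx K p = card {j \<in> K. j < p}"

definition block_start :: "nat \<Rightarrow> nat set \<Rightarrow> nat \<Rightarrow> nat" where
  "block_start n K t = card {p \<in> {1..n}. block_idx K p < t}"

definition block_incr :: "nat \<Rightarrow> nat set \<Rightarrow> (nat \<Rightarrow> nat) \<Rightarrow> (nat \<Rightarrow> nat) set" where
  "block_incr n K f = {\<sigma>. \<sigma> permutes {1..n} \<and> (\<forall>p \<in> {1..n-1} - K. f (\<sigma> p) < f (\<sigma> (Suc p)))}"

definition val_block :: "nat set \<Rightarrow> (nat \<Rightarrow> nat) \<Rightarrow> nat \<Rightarrow> nat" where
  "val_block K \<sigma> x = block_idx K (inv \<sigma> x)"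

definition block_rank :: "nat \<Rightarrow> (nat \<Rightarrow> nat) \<Rightarrow> (nat \<Rightarrow> nat) \<Rightarrow> nat \<Rightarrow> nat" where
  "block_rank n f b x = card {y \<in> {1..n}. b y = b x \<and> f y < f x}"

text \<open>If value \<open>x\<close> is to lie in block \<open>b x\<close> and every block is to be increasing with respect to \<open>f\<close>,
  then \<open>x\<close> must sit at position \<open>block_pos n K f b x\<close>.\<close>

definition block_pos :: "nat \<Rightarrow> nat set \<Rightarrow> (nat \<Rightarrow> nat) \<Rightarrow> (nat \<Rightarrow> nat) \<Rightarrow> nat \<Rightarrow> nat" where
  "block_pos n K f b x = (if x \<in> {1..n} then block_start n K (b x) + block_rank n f b x + 1 else x)"

lemma block_idx_mono: "finite K \<Longrightarrow> p \<le> q \<Longrightarrow> block_idx K p \<le> block_idx K q"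
  unfolding block_idx_def by (intro card_mono) auto

lemma block_idx_Suc: "finite K \<Longrightarrow> block_idx K (Suc p) = block_idx K p + (if p \<in> K then 1 else 0)"
proof -
  assume "finite K"
  moreover have "{j \<in> K. j < Suc p} = {j \<in> K. j < p} \<union> (if p \<in> K then {p} else {})"
    by (auto simp: less_Suc_eq)
  ultimately show ?thesis unfolding block_idx_def by (auto simp: card_insert_if)
qed

lemma down_closed_eq_atLeastAtMost_card:
  assumes "D \<subseteq> {1..m}" "\<And>p q. p \<in> D \<Longrightarrow> 1 \<le> q \<Longrightarrow> q \<le> p \<Longrightarrow> q \<in> D"
  shows "D = {1..card D}"
proof (cases "D = {}")
  case False
  have "finite D" using assms(1) finite_subset by blast
  define M where "M = Max D"
  have "M \<in> D" using False \<open>finite D\<close> M_def by simp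
  have "D = {1..M}"
  proof
    show "D \<subseteq> {1..M}" using assms(1) \<open>finite D\<close> M_def by auto
    show "{1..M} \<subseteq> D" using assms(2) \<open>M \<in> D\<close> by auto
  qed
  then show ?thesis by simp
qed simp

lemma block_idx_less_iff:
  assumes K: "finite K" and p: "p \<in> {1..n}"
  shows "block_idx K p < t \<longleftrightarrow> p \<le> block_start n K t"
proof -
  let ?D = "{p \<in> {1..n}. block_idx K p < t}"
  have "?D = {1..card ?D}"
    by (rule down_closed_eq_atLeastAtMost_card[where m = n])
       (auto intro: le_less_trans[OF block_idx_mono[OF K]])
  then have "p \<in> ?D \<longleftrightarrow> p \<in> {1..block_start n K t}" unfolding block_start_def by simp
  then show ?thesis using p by auto
qed

lemma block_idx_eq_iff:
  "finite K \<Longrightarrow> p \<in> {1..n} \<Longrightarrow>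
    block_idx K p = t \<longleftrightarrow> block_start n K t < p \<and> p \<le> block_start n K (Suc t)"
  using block_idx_less_iff[of K p n t] block_idx_less_iff[of K p n "Suc t"] by auto

lemma block_start_le: "block_start n K t \<le> n"
  unfolding block_start_def by (rule order.trans[OF card_mono[of "{1..n}"]]) auto

lemma block_start_mono: "t \<le> t' \<Longrightarrow> block_start n K t \<le> block_start n K t'"
  unfolding block_start_def by (intro card_mono) auto

lemma card_block:
  "card {p \<in> {1..n}. block_idx K p = t} = block_start n K (Suc t) - block_start n K t"
proof -
  have "{p \<in> {1..n}. block_idx K p < Suc t} = {p \<in> {1..n}. block_idx K p < t} \<union> {p \<in> {1..n}. block_idx K p = t}"
    by auto
  then have "block_start n K (Suc t) = block_start n K t + card {p \<in> {1..n}. block_idx K p = t}"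
    unfolding block_start_def by (subst card_Un_disjoint[symmetric]) auto
  then show ?thesis by simp
qed

lemma card_less_pos:
  assumes K: "finite K" and q: "q \<in> {1..n}"
  shows "q - 1 = block_start n K (block_idx K q) + card {p \<in> {1..n}. block_idx K p = block_idx K q \<and> p < q}"
proof -
  let ?B = "{p \<in> {1..n}. block_idx K p = block_idx K q \<and> p < q}"
  have split: "{p \<in> {1..n}. p < q} = {p \<in> {1..n}. block_idx K p < block_idx K q} \<union> ?B"
  proof (intro set_eqI iffI)
    fix p assume p: "p \<in> {p \<in> {1..n}. p < q}"
    then have "block_idx K p \<le> block_idx K q" using block_idx_mono[OF K] by simp
    then show "p \<in> {p \<in> {1..n}. block_idx K p < block_idx K q} \<union> ?B" using p by auto
  next
    fix p assume p: "p \<in> {p \<in> {1..n}. block_idx K p < block_idx K q} \<union> ?B"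
    have "p < q"
    proof (rule ccontr)
      assume np: "\<not> p < q"
      then have "block_idx K q \<le> block_idx K p" using block_idx_mono[OF K] by simp
      then show False using p np by auto
    qed
    then show "p \<in> {p \<in> {1..n}. p < q}" using p by auto
  qed
  have "card {p \<in> {1..n}. p < q} = block_start n K (block_idx K q) + card ?B"
    unfolding split block_start_def by (rule card_Un_disjoint) auto
  moreover have "{p \<in> {1..n}. p < q} = {1..<q}" using q by auto
  ultimately show ?thesis by simp
qed

lemma block_incr_permutes: "\<sigma> \<in> block_incr n K f \<Longrightarrow> \<sigma> permutes {1..n}"
  by (simp add: block_incr_def)

lemma block_incr_less_in_block:
  assumes K: "finite K" and \<sigma>: "\<sigma> \<in> block_incr n K f" and pq: "p < q" "1 \<le> p" "q \<le> n"
    and same: "block_idx K p = block_idx K q"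
  shows "f (\<sigma> p) < f (\<sigma> q)"
proof (rule less_of_Suc_steps[of p q "\<lambda>r. f (\<sigma> r)", OF _ pq(1)])
  fix r assume r: "p \<le> r" "r < q"
  have "r \<notin> K"
  proof
    assume "r \<in> K"
    then have "block_idx K (Suc r) = block_idx K r + 1" using block_idx_Suc[OF K] by simp
    moreover have "block_idx K p \<le> block_idx K r" using block_idx_mono[OF K r(1)] .
    moreover have "block_idx K (Suc r) \<le> block_idx K q" using block_idx_mono[OF K] r(2) by simp
    ultimately show False using same by simp
  qed
  then show "f (\<sigma> r) < f (\<sigma> (Suc r))" using \<sigma> r pq unfolding block_incr_def by auto
qed

lemma block_rank_val_block:
  assumes K: "finite K" and \<sigma>: "\<sigma> \<in> block_incr n K f" and x: "x \<in> {1..n}"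
  defines "q \<equiv> inv \<sigma> x"
  shows "block_rank n f (val_block K \<sigma>) x = card {p \<in> {1..n}. block_idx K p = block_idx K q \<and> p < q}"
proof -
  let ?B = "{p \<in> {1..n}. block_idx K p = block_idx K q \<and> p < q}"
  have sp: "\<sigma> permutes {1..n}" using block_incr_permutes[OF \<sigma>] .
  have q: "q \<in> {1..n}" "\<sigma> q = x" using permutes_inv_imp_mem[OF sp x] permutes_inverses(1)[OF sp] q_def by auto
  have "{y \<in> {1..n}. val_block K \<sigma> y = val_block K \<sigma> x \<and> f y < f x} = \<sigma> ` ?B"
  proof (intro set_eqI iffI)
    fix y assume y: "y \<in> {y \<in> {1..n}. val_block K \<sigma> y = val_block K \<sigma> x \<and> f y < f x}"
    define p where "p = inv \<sigma> y"
    have p: "p \<in> {1..n}" "\<sigma> p = y" "block_idx K p = block_idx K q"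
      using y permutes_inv_imp_mem[OF sp] permutes_inverses(1)[OF sp]
      by (auto simp: p_def q_def val_block_def)
    have "p < q"
      using block_incr_less_in_block[OF K \<sigma>, of q p] y p q by (cases p q rule: linorder_cases) auto
    then show "y \<in> \<sigma> ` ?B" using p by auto
  next
    fix y assume "y \<in> \<sigma> ` ?B"
    then obtain p where p: "p \<in> ?B" "y = \<sigma> p" by auto
    then show "y \<in> {y \<in> {1..n}. val_block K \<sigma> y = val_block K \<sigma> x \<and> f y < f x}"
      using block_incr_less_in_block[OF K \<sigma>, of p q] q permutes_imp_mem[OF sp]
      by (auto simp: val_block_def permutes_inverses(2)[OF sp] q_def)
  qed
  moreover have "inj_on \<sigma> ?B" using permutes_inj[OF sp] by (auto simp: inj_on_def inj_def)
  ultimately show ?thesis unfolding block_rank_def by (simp add: card_image)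
qed

lemma block_incr_inv_eq_block_pos:
  assumes K: "finite K" and \<sigma>: "\<sigma> \<in> block_incr n K f" and x: "x \<in> {1..n}"
  shows "inv \<sigma> x = block_pos n K f (val_block K \<sigma>) x"
proof -
  have "inv \<sigma> x \<in> {1..n}" using permutes_inv_imp_mem[OF block_incr_permutes[OF \<sigma>] x] .
  then show ?thesis
    using card_less_pos[OF K, of "inv \<sigma> x" n] block_rank_val_block[OF K \<sigma> x] x
    by (simp add: block_pos_def val_block_def) arith
qed

lemma inj_on_val_block:
  assumes K: "finite K"
  shows "inj_on (val_block K) (block_incr n K f)"
proof (rule inj_onI)
  fix \<sigma> \<tau> assume \<sigma>: "\<sigma> \<in> block_incr n K f" and \<tau>: "\<tau> \<in> block_incr n K f"
    and eq: "val_block K \<sigma> = val_block K \<tau>"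
  have sp: "\<sigma> permutes {1..n}" and tp: "\<tau> permutes {1..n}" using \<sigma> \<tau> by (auto simp: block_incr_def)
  have "inv \<sigma> = inv \<tau>"
  proof
    fix x
    show "inv \<sigma> x = inv \<tau> x"
      using block_incr_inv_eq_block_pos[OF K \<sigma>] block_incr_inv_eq_block_pos[OF K \<tau>] eq
        permutes_not_in[OF permutes_inv[OF sp]] permutes_not_in[OF permutes_inv[OF tp]]
      by (cases "x \<in> {1..n}") auto
  qed
  then show "\<sigma> = \<tau>" using permutes_inv_inv[OF sp] permutes_inv_inv[OF tp] by metis
qed

text \<open>Conversely, every assignment of values to blocks that comes from some permutation \<open>\<sigma>\<^sub>0\<close> is
  realised by a (unique) permutation that is increasing on blocks.\<close>

context
  fixes n :: nat and K :: "nat set" and f :: "nat \<Rightarrow> nat" and \<sigma>\<^sub>0 :: "nat \<Rightarrow> nat"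
  assumes K: "finite K" and \<sigma>\<^sub>0: "\<sigma>\<^sub>0 permutes {1..n}" and f: "inj_on f {1..n}"
begin

lemma val_block_fiber:
  "{y \<in> {1..n}. val_block K \<sigma>\<^sub>0 y = t} = \<sigma>\<^sub>0 ` {p \<in> {1..n}. block_idx K p = t}"
proof
  show "{y \<in> {1..n}. val_block K \<sigma>\<^sub>0 y = t} \<subseteq> \<sigma>\<^sub>0 ` {p \<in> {1..n}. block_idx K p = t}"
  proof
    fix y assume y: "y \<in> {y \<in> {1..n}. val_block K \<sigma>\<^sub>0 y = t}"
    have "\<sigma>\<^sub>0 (inv \<sigma>\<^sub>0 y) = y" using \<sigma>\<^sub>0 by (simp add: permutes_inverses(1))
    moreover have "inv \<sigma>\<^sub>0 y \<in> {p \<in> {1..n}. block_idx K p = t}"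
      using y permutes_inv_imp_mem[OF \<sigma>\<^sub>0] by (auto simp: val_block_def)
    ultimately show "y \<in> \<sigma>\<^sub>0 ` {p \<in> {1..n}. block_idx K p = t}" by (metis image_eqI)
  qed
  show "\<sigma>\<^sub>0 ` {p \<in> {1..n}. block_idx K p = t} \<subseteq> {y \<in> {1..n}. val_block K \<sigma>\<^sub>0 y = t}"
  proof
    fix y assume "y \<in> \<sigma>\<^sub>0 ` {p \<in> {1..n}. block_idx K p = t}"
    then obtain p where p: "p \<in> {1..n}" "block_idx K p = t" "y = \<sigma>\<^sub>0 p" by auto
    then show "y \<in> {y \<in> {1..n}. val_block K \<sigma>\<^sub>0 y = t}"
      using permutes_imp_mem[OF \<sigma>\<^sub>0 p(1)] by (simp add: val_block_def permutes_inverses(2)[OF \<sigma>\<^sub>0])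
  qed
qed

lemma card_val_block_eq:
  "card {y \<in> {1..n}. val_block K \<sigma>\<^sub>0 y = t} = block_start n K (Suc t) - block_start n K t"
proof -
  have "inj_on \<sigma>\<^sub>0 {p \<in> {1..n}. block_idx K p = t}"
    using permutes_inj[OF \<sigma>\<^sub>0] by (auto simp: inj_on_def inj_def)
  then show ?thesis using val_block_fiber card_block by (simp add: card_image)
qed

lemma block_pos_in_block:
  assumes x: "x \<in> {1..n}"
  shows "block_pos n K f (val_block K \<sigma>\<^sub>0) x \<in> {1..n}"
    and "block_idx K (block_pos n K f (val_block K \<sigma>\<^sub>0) x) = val_block K \<sigma>\<^sub>0 x"
proof -
  let ?b = "val_block K \<sigma>\<^sub>0"
  have "{y \<in> {1..n}. ?b y = ?b x \<and> f y < f x} \<subset> {y \<in> {1..n}. ?b y = ?b x}"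
    using x by auto
  then have "block_rank n f ?b x < card {y \<in> {1..n}. ?b y = ?b x}"
    unfolding block_rank_def by (intro psubset_card_mono) auto
  then have bounds: "block_start n K (?b x) < block_pos n K f ?b x"
      "block_pos n K f ?b x \<le> block_start n K (Suc (?b x))"
    using x card_val_block_eq by (auto simp: block_pos_def)
  then show "block_pos n K f ?b x \<in> {1..n}" using block_start_le[of n K "Suc (?b x)"] by auto
  then show "block_idx K (block_pos n K f ?b x) = ?b x" using block_idx_eq_iff[OF K] bounds by blast
qed

lemma block_rank_less:
  assumes "x \<in> {1..n}" "y \<in> {1..n}" "b y = b x" "f y < f x"
  shows "block_rank n f b y < block_rank n f b x"
  unfolding block_rank_def by (rule psubset_card_mono) (use assms in auto)

lemma block_pos_permutes: "block_pos n K f (val_block K \<sigma>\<^sub>0) permutes {1..n}"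
proof -
  let ?\<iota> = "block_pos n K f (val_block K \<sigma>\<^sub>0)"
  have "inj_on ?\<iota> {1..n}"
  proof (rule inj_onI)
    fix x y assume x: "x \<in> {1..n}" and y: "y \<in> {1..n}" and eq: "?\<iota> x = ?\<iota> y"
    then have same: "val_block K \<sigma>\<^sub>0 x = val_block K \<sigma>\<^sub>0 y" using block_pos_in_block(2) by metis
    have rank: "block_rank n f (val_block K \<sigma>\<^sub>0) x = block_rank n f (val_block K \<sigma>\<^sub>0) y"
      using eq x y same by (simp add: block_pos_def)
    show "x = y"
    proof (rule ccontr)
      assume "x \<noteq> y"
      then have "f x \<noteq> f y" using inj_onD[OF f _ x y] by auto
      moreover have "f y < f x \<Longrightarrow> block_rank n f (val_block K \<sigma>\<^sub>0) y < block_rank n f (val_block K \<sigma>\<^sub>0) x"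
        using block_rank_less[OF x y, where b = "val_block K \<sigma>\<^sub>0"] same by simp
      moreover have "f x < f y \<Longrightarrow> block_rank n f (val_block K \<sigma>\<^sub>0) x < block_rank n f (val_block K \<sigma>\<^sub>0) y"
        using block_rank_less[OF y x, where b = "val_block K \<sigma>\<^sub>0"] same by simp
      ultimately show False using rank by (cases "f x < f y") auto
    qed
  qed
  moreover have "?\<iota> ` {1..n} = {1..n}"
    by (rule endo_inj_surj) (use block_pos_in_block(1) \<open>inj_on ?\<iota> {1..n}\<close> in auto)
  ultimately show ?thesis
    by (intro bij_imp_permutes) (auto simp: bij_betw_def block_pos_def)
qed

lemma val_block_inv_block_pos: "val_block K (inv (block_pos n K f (val_block K \<sigma>\<^sub>0))) = val_block K \<sigma>\<^sub>0"
proof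
  fix x
  let ?\<iota> = "block_pos n K f (val_block K \<sigma>\<^sub>0)"
  have "inv (inv ?\<iota>) = ?\<iota>" using permutes_inv_inv[OF block_pos_permutes] .
  then show "val_block K (inv ?\<iota>) x = val_block K \<sigma>\<^sub>0 x"
    using block_pos_in_block(2) permutes_not_in[OF permutes_inv[OF \<sigma>\<^sub>0]]
    by (cases "x \<in> {1..n}") (auto simp: val_block_def block_pos_def)
qed

lemma inv_block_pos_block_incr: "inv (block_pos n K f (val_block K \<sigma>\<^sub>0)) \<in> block_incr n K f"
  unfolding block_incr_def
proof (intro CollectI conjI ballI)
  let ?b = "val_block K \<sigma>\<^sub>0"
  let ?\<iota> = "block_pos n K f ?b"
  have ip: "?\<iota> permutes {1..n}" by (rule block_pos_permutes)
  show "inv ?\<iota> permutes {1..n}" using permutes_inv[OF ip] .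
  fix p assume p: "p \<in> {1..n-1} - K"
  define x where "x = inv ?\<iota> p"
  define y where "y = inv ?\<iota> (Suc p)"
  have x: "x \<in> {1..n}" "?\<iota> x = p" and y: "y \<in> {1..n}" "?\<iota> y = Suc p"
    using p permutes_inv_imp_mem[OF ip] permutes_inverses(1)[OF ip] by (auto simp: x_def y_def)
  have same: "?b y = ?b x"
    using block_pos_in_block(2)[OF x(1)] block_pos_in_block(2)[OF y(1)] x(2) y(2) block_idx_Suc[OF K, of p] p
    by auto
  then have "block_rank n f ?b y = Suc (block_rank n f ?b x)"
    using x y by (simp add: block_pos_def)
  moreover have "f x \<noteq> f y" using inj_onD[OF f _ x(1) y(1)] x(2) y(2) by auto
  ultimately show "f (inv ?\<iota> p) < f (inv ?\<iota> (Suc p))"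
    using block_rank_less[OF x(1) y(1) same] unfolding x_def y_def by fastforce
qed

end

lemma val_block_image_block_incr:
  assumes "finite K" "inj_on f {1..n}"
  shows "val_block K ` block_incr n K f = val_block K ` {\<sigma>. \<sigma> permutes {1..n}}"
proof
  show "val_block K ` {\<sigma>. \<sigma> permutes {1..n}} \<subseteq> val_block K ` block_incr n K f"
    using inv_block_pos_block_incr[OF assms(1) _ assms(2)] val_block_inv_block_pos[OF assms(1) _ assms(2)]
    by (metis (no_types, lifting) image_iff image_subsetI mem_Collect_eq)
qed (auto simp: block_incr_def)

lemma finite_block_incr: "finite (block_incr n K f)"
  by (rule finite_subset[OF _ finite_permutations[of "{1..n}"]]) (auto simp: block_incr_def)

lemma image_mset_block_incr_eq:
  assumes K: "finite K" and f1: "inj_on f\<^sub>1 {1..n}" and f2: "inj_on f\<^sub>2 {1..n}"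
    and G1: "\<And>\<sigma>. \<sigma> \<in> block_incr n K f\<^sub>1 \<Longrightarrow> Q (val_block K \<sigma>) \<Longrightarrow> G \<sigma> = W (val_block K \<sigma>)"
    and G2: "\<And>\<sigma>. \<sigma> \<in> block_incr n K f\<^sub>2 \<Longrightarrow> Q (val_block K \<sigma>) \<Longrightarrow> G \<sigma> = W (val_block K \<sigma>)"
  shows "image_mset G (mset_set {\<sigma> \<in> block_incr n K f\<^sub>1. Q (val_block K \<sigma>)})
       = image_mset G (mset_set {\<sigma> \<in> block_incr n K f\<^sub>2. Q (val_block K \<sigma>)})"
proof -
  have "image_mset G (mset_set {\<sigma> \<in> block_incr n K f. Q (val_block K \<sigma>)})
      = image_mset W (mset_set {b \<in> val_block K ` {\<sigma>. \<sigma> permutes {1..n}}. Q b})"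
    if f: "inj_on f {1..n}"
      and G: "\<And>\<sigma>. \<sigma> \<in> block_incr n K f \<Longrightarrow> Q (val_block K \<sigma>) \<Longrightarrow> G \<sigma> = W (val_block K \<sigma>)" for f
  proof -
    let ?A = "{\<sigma> \<in> block_incr n K f. Q (val_block K \<sigma>)}"
    have "finite ?A" using finite_block_incr by simp
    moreover have "inj_on (val_block K) ?A" using inj_on_val_block[OF K] by (rule inj_on_subset) auto
    ultimately have "image_mset G (mset_set ?A) = image_mset W (mset_set (val_block K ` ?A))"
      by (rule image_mset_mset_set_inj_on_comp) (use G in auto)
    also have "val_block K ` ?A = {b \<in> val_block K ` block_incr n K f. Q b}"
      by auto
    also have "\<dots> = {b \<in> val_block K ` {\<sigma>. \<sigma> permutes {1..n}}. Q b}"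
      using val_block_image_block_incr[OF K f] by simp
    finally show ?thesis .
  qed
  from this[OF f1 G1] this[OF f2 G2] show ?thesis by simp
qed

section \<open>Cyclic rotation of values\<close>

lemma csucc_eq: "x \<in> {1..n} \<Longrightarrow> csucc n x = (if x < n then Suc x else 1)"
  by (auto simp: csucc_def)

lemma csucc_mem: "x \<in> {1..n} \<Longrightarrow> csucc n x \<in> {1..n}"
  by (auto simp: csucc_eq)

lemma csucc_neq: "2 \<le> n \<Longrightarrow> x \<in> {1..n} \<Longrightarrow> csucc n x \<noteq> x"
  by (auto simp: csucc_eq)

lemma inj_on_csucc: "inj_on (csucc n) {1..n}"
proof (rule inj_onI)
  fix x y assume x: "x \<in> {1..n}" and y: "y \<in> {1..n}" and eq: "csucc n x = csucc n y"
  show "x = y"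
  proof (cases "x < n")
    case True
    then show ?thesis using eq x y by (cases "y < n") (simp_all add: csucc_eq)
  next
    case False
    then show ?thesis using eq x y by (cases "y < n") (simp_all add: csucc_eq)
  qed
qed

definition cyc_perm :: "nat \<Rightarrow> nat \<Rightarrow> nat" where
  "cyc_perm n x = (if x \<in> {1..n} then csucc n x else x)"

lemma cyc_perm_permutes: "cyc_perm n permutes {1..n}"
proof (rule bij_imp_permutes)
  have eq: "cyc_perm n x = csucc n x" if "x \<in> {1..n}" for x using that by (simp add: cyc_perm_def)
  have inj: "inj_on (cyc_perm n) {1..n}" using inj_on_cong[of "{1..n}" "cyc_perm n" "csucc n"] eq inj_on_csucc by simp
  have sub: "cyc_perm n ` {1..n} \<subseteq> {1..n}" using eq csucc_mem by auto
  have "cyc_perm n ` {1..n} = {1..n}" by (rule endo_inj_surj[OF _ sub inj]) simp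
  then show "bij_betw (cyc_perm n) {1..n} {1..n}" using inj by (simp add: bij_betw_def)
  show "cyc_perm n x = x" if "x \<notin> {1..n}" for x unfolding cyc_perm_def using that by (rule if_not_P)
qed

lemma cyc_perm_funpow: "x \<in> {1..n} \<Longrightarrow> (cyc_perm n ^^ j) x = (x - 1 + j) mod n + 1"
proof (induction j)
  case 0
  then have "x - 1 < n" by auto
  then show ?case using 0 by simp
next
  case (Suc j)
  have "0 < n" using Suc.prems by auto
  then have "(x - 1 + j) mod n < n" by (rule mod_less_divisor)
  then have y: "(x - 1 + j) mod n + 1 \<in> {1..n}" by (simp only: atLeastAtMost_iff) linarith
  have "(cyc_perm n ^^ Suc j) x = cyc_perm n ((x - 1 + j) mod n + 1)" using Suc by simp
  also have "\<dots> = csucc n ((x - 1 + j) mod n + 1)" using y by (simp add: cyc_perm_def)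
  also have "\<dots> = Suc ((x - 1 + j) mod n) mod n + 1" by (simp add: csucc_def)
  also have "\<dots> = Suc (x - 1 + j) mod n + 1" by (simp add: mod_Suc_eq)
  finally show ?case by simp
qed

lemma funpow_cyc_perm_permutes: "(cyc_perm n ^^ j) permutes {1..n}"
proof (induction j)
  case 0
  then show ?case using permutes_id[of "{1..n}"] by (simp add: id_def)
next
  case (Suc j)
  then show ?case using permutes_compose[OF Suc cyc_perm_permutes] by (simp only: funpow.simps(2))
qed

definition rot_to_last :: "nat \<Rightarrow> nat \<Rightarrow> nat \<Rightarrow> nat" where
  "rot_to_last n v x = (x + n - v - 1) mod n + 1"

lemma rot_to_last_eq_funpow:
  assumes "v \<in> {1..n}" "x \<in> {1..n}"
  shows "rot_to_last n v x = (cyc_perm n ^^ (n - v)) x"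
proof -
  have "x - 1 + (n - v) = x + n - v - 1" using assms by auto
  then show ?thesis using cyc_perm_funpow[OF assms(2), of "n - v"] by (simp add: rot_to_last_def)
qed

lemma rot_to_last_eq:
  assumes "x \<in> {1..n}" "v \<in> {1..n}"
  shows "rot_to_last n v x = (if v < x then x - v else x + n - v)"
proof (cases "v < x")
  case True
  then have e: "x + n - v - 1 = (x - v - 1) + n" using assms by auto
  have "(x + n - v - 1) mod n = (x - v - 1) mod n" unfolding e by simp
  moreover have "x - v - 1 < n" using assms by auto
  ultimately have "(x + n - v - 1) mod n = x - v - 1" by simp
  then show ?thesis using True unfolding rot_to_last_def by simp
next
  case False
  then have "x + n - v - 1 < n" using assms by auto
  then show ?thesis using False assms by (simp add: rot_to_last_def)
qed

lemma inj_on_rot_to_last: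
  assumes v: "v \<in> {1..n}"
  shows "inj_on (rot_to_last n v) {1..n}"
proof (rule inj_onI)
  fix x y assume x: "x \<in> {1..n}" and y: "y \<in> {1..n}" and eq: "rot_to_last n v x = rot_to_last n v y"
  then have "(cyc_perm n ^^ (n - v)) x = (cyc_perm n ^^ (n - v)) y"
    using rot_to_last_eq_funpow[OF v x] rot_to_last_eq_funpow[OF v y] by simp
  then show "x = y" by (rule injD[OF permutes_inj[OF funpow_cyc_perm_permutes]])
qed

lemma rot_to_last_less_Suc:
  "v \<in> {1..n} \<Longrightarrow> i \<in> {1..n-1} \<Longrightarrow> i \<noteq> v \<Longrightarrow> rot_to_last n v i < rot_to_last n v (Suc i)"
  by (auto simp: rot_to_last_eq)

lemma rot_to_last_cyc_perm:
  assumes v: "v \<in> {1..n}" and x: "x \<in> {1..n}"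
  shows "rot_to_last n (cyc_perm n v) (cyc_perm n x) = rot_to_last n v x"
proof -
  have "cyc_perm n v \<in> {1..n}" "cyc_perm n x \<in> {1..n}"
    using permutes_imp_mem[OF cyc_perm_permutes] v x by auto
  moreover have "cyc_perm n v = (if v < n then Suc v else 1)" "cyc_perm n x = (if x < n then Suc x else 1)"
    using v x by (simp_all add: cyc_perm_def csucc_eq)
  ultimately show ?thesis using v x by (auto simp: rot_to_last_eq)
qed

section \<open>Inverse descents of permutations with a prescribed last value\<close>

definition inv_des :: "nat \<Rightarrow> (nat \<Rightarrow> nat) \<Rightarrow> nat set" where
  "inv_des n \<sigma> = {i \<in> {1..n-1}. inv \<sigma> (Suc i) < inv \<sigma> i}"

definition head_des :: "nat \<Rightarrow> (nat \<Rightarrow> nat) \<Rightarrow> nat set" where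
  "head_des n \<sigma> = {p \<in> {1..n-2}. \<sigma> (Suc p) < \<sigma> p}"

definition des_class :: "nat \<Rightarrow> nat set \<Rightarrow> (nat \<Rightarrow> nat) set" where
  "des_class n S = {\<sigma>. \<sigma> permutes {1..n} \<and> head_des n \<sigma> = S}"

definition rot_des_class :: "nat \<Rightarrow> nat set \<Rightarrow> (nat \<Rightarrow> nat) set" where
  "rot_des_class n S = {\<sigma>. \<sigma> permutes {1..n} \<and> head_des n (rot_to_last n (\<sigma> n) \<circ> \<sigma>) = S}"

lemma finite_permutes_atLeastAtMost: "finite {\<sigma>. \<sigma> permutes {1..(n::nat)} \<and> P \<sigma>}"
  using finite_permutations[OF finite_atLeastAtMost[of "1::nat" n]] by (rule rev_finite_subset) auto

lemma inv_des_eq_val_block_des: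
  assumes K: "finite K" and \<sigma>: "\<sigma> \<in> block_incr n K f"
    and compat: "\<And>i. i \<in> {1..n-1} \<Longrightarrow> val_block K \<sigma> i = val_block K \<sigma> (Suc i) \<Longrightarrow> f i < f (Suc i)"
  shows "inv_des n \<sigma> = {i \<in> {1..n-1}. val_block K \<sigma> (Suc i) < val_block K \<sigma> i}"
proof -
  have sp: "\<sigma> permutes {1..n}" using block_incr_permutes[OF \<sigma>] .
  have "inv \<sigma> (Suc i) < inv \<sigma> i \<longleftrightarrow> val_block K \<sigma> (Suc i) < val_block K \<sigma> i" if i: "i \<in> {1..n-1}" for i
  proof
    define p q where "p = inv \<sigma> i" and "q = inv \<sigma> (Suc i)"
    have pq: "p \<in> {1..n}" "\<sigma> p = i" "q \<in> {1..n}" "\<sigma> q = Suc i"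
      using i permutes_inv_imp_mem[OF sp] permutes_inverses(1)[OF sp] by (auto simp: p_def q_def)
    assume "inv \<sigma> (Suc i) < inv \<sigma> i"
    then have "q < p" by (simp add: p_def q_def)
    then have le: "block_idx K q \<le> block_idx K p" using block_idx_mono[OF K] by simp
    have "block_idx K q \<noteq> block_idx K p"
    proof
      assume same: "block_idx K q = block_idx K p"
      then have "f (Suc i) < f i" using block_incr_less_in_block[OF K \<sigma> \<open>q < p\<close>] pq by auto
      moreover have "f i < f (Suc i)" using compat[OF i] same by (simp add: val_block_def p_def q_def)
      ultimately show False by simp
    qed
    then show "val_block K \<sigma> (Suc i) < val_block K \<sigma> i" using le by (simp add: val_block_def p_def q_def)
  next
    assume lt: "val_block K \<sigma> (Suc i) < val_block K \<sigma> i"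
    show "inv \<sigma> (Suc i) < inv \<sigma> i"
    proof (rule ccontr)
      assume "\<not> inv \<sigma> (Suc i) < inv \<sigma> i"
      then have "block_idx K (inv \<sigma> i) \<le> block_idx K (inv \<sigma> (Suc i))" using block_idx_mono[OF K] by simp
      then show False using lt by (simp add: val_block_def)
    qed
  qed
  then show ?thesis unfolding inv_des_def by auto
qed

lemma block_idx_eq_card_iff:
  assumes K: "K \<subseteq> {1..n-1}" "n - 1 \<in> K" and p: "p \<in> {1..n}" and n: "2 \<le> n"
  shows "block_idx K p = card K \<longleftrightarrow> p = n"
proof -
  have fK: "finite K" using K finite_subset by blast
  have "block_idx K p = card K \<longleftrightarrow> {j \<in> K. j < p} = K"
  proof
    assume "block_idx K p = card K"
    then show "{j \<in> K. j < p} = K" unfolding block_idx_def using fK by (intro card_subset_eq) auto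
  qed (simp add: block_idx_def)
  also have "\<dots> \<longleftrightarrow> p = n"
  proof
    assume "{j \<in> K. j < p} = K"
    then have "n - 1 < p" using K(2) by blast
    then show "p = n" using p n by simp
  next
    assume pn: "p = n"
    have "j < n" if "j \<in> K" for j
    proof -
      have "j \<le> n - 1" using K(1) that by auto
      then show "j < n" using n by simp
    qed
    then show "{j \<in> K. j < p} = K" using pn by auto
  qed
  finally show ?thesis .
qed

lemma val_block_eq_card_iff:
  assumes "K \<subseteq> {1..n-1}" "n - 1 \<in> K" "2 \<le> n" and sp: "\<sigma> permutes {1..n}" and v: "v \<in> {1..n}"
  shows "val_block K \<sigma> v = card K \<longleftrightarrow> \<sigma> n = v"
proof -
  have "val_block K \<sigma> v = card K \<longleftrightarrow> inv \<sigma> v = n"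
    unfolding val_block_def using block_idx_eq_card_iff[OF assms(1,2) permutes_inv_imp_mem[OF sp v] assms(3)] .
  also have "\<dots> \<longleftrightarrow> \<sigma> n = v"
  proof
    assume "inv \<sigma> v = n"
    then show "\<sigma> n = v" using permutes_inverses(1)[OF sp, of v] by simp
  next
    assume "\<sigma> n = v"
    then show "inv \<sigma> v = n" using permutes_inverses(2)[OF sp, of n] by simp
  qed
  finally show ?thesis .
qed

lemma block_incr_cond_iff_head_des_subset:
  assumes sp: "\<sigma> permutes {1..n}" and f: "inj_on f {1..n}" and J: "J \<subseteq> {1..n-2}"
  shows "(\<forall>p \<in> {1..n-1} - insert (n-1) J. f (\<sigma> p) < f (\<sigma> (Suc p))) \<longleftrightarrow> head_des n (f \<circ> \<sigma>) \<subseteq> J"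
proof -
  have ne: "f (\<sigma> p) \<noteq> f (\<sigma> (Suc p))" if "p \<in> {1..n-2}" for p
  proof
    assume fe: "f (\<sigma> p) = f (\<sigma> (Suc p))"
    have p: "p \<in> {1..n}" "Suc p \<in> {1..n}" using that by auto
    have "\<sigma> p = \<sigma> (Suc p)"
      by (rule inj_onD[OF f fe permutes_imp_mem[OF sp p(1)] permutes_imp_mem[OF sp p(2)]])
    then have "p = Suc p" by (rule injD[OF permutes_inj[OF sp]])
    then show False by simp
  qed
  show ?thesis
  proof
    assume H: "\<forall>p \<in> {1..n-1} - insert (n-1) J. f (\<sigma> p) < f (\<sigma> (Suc p))"
    show "head_des n (f \<circ> \<sigma>) \<subseteq> J"
    proof
      fix x assume x: "x \<in> head_des n (f \<circ> \<sigma>)"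
      then have x: "x \<in> {1..n-2}" "f (\<sigma> (Suc x)) < f (\<sigma> x)" unfolding head_des_def by simp_all
      show "x \<in> J"
      proof (rule ccontr)
        assume "x \<notin> J"
        then have "f (\<sigma> x) < f (\<sigma> (Suc x))" using H x(1) by auto
        then show False using x(2) by simp
      qed
    qed
  next
    assume H: "head_des n (f \<circ> \<sigma>) \<subseteq> J"
    show "\<forall>p \<in> {1..n-1} - insert (n-1) J. f (\<sigma> p) < f (\<sigma> (Suc p))"
    proof
      fix p assume "p \<in> {1..n-1} - insert (n-1) J"
      then have p: "p \<in> {1..n-2}" "p \<notin> J" by auto
      show "f (\<sigma> p) < f (\<sigma> (Suc p))"
      proof (rule ccontr)
        assume "\<not> f (\<sigma> p) < f (\<sigma> (Suc p))"
        then have "p \<in> head_des n (f \<circ> \<sigma>)" using ne[OF p(1)] p(1) unfolding head_des_def by simp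
        then show False using H p(2) by blast
      qed
    qed
  qed
qed

lemma last_val_head_des_subset_eq_block_incr:
  assumes n: "2 \<le> n" and J: "J \<subseteq> {1..n-2}" and v: "v \<in> {1..n}" and f: "inj_on f {1..n}"
  shows "{\<sigma>. \<sigma> permutes {1..n} \<and> \<sigma> n = v \<and> head_des n (f \<circ> \<sigma>) \<subseteq> J}
       = {\<sigma> \<in> block_incr n (insert (n-1) J) f. val_block (insert (n-1) J) \<sigma> v = card (insert (n-1) J)}"
proof -
  have K: "insert (n-1) J \<subseteq> {1..n-1}" using J n by (auto simp: subset_iff)
  show ?thesis
    using block_incr_cond_iff_head_des_subset[OF _ f J] val_block_eq_card_iff[OF K _ n _ v]
    unfolding block_incr_def by blast
qed

text \<open>For permutations with last value \<open>v\<close>, rotating the values so that \<open>v\<close> becomes \<open>n\<close> does not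
  change the joint distribution of the inverse descents and the condition on the descents of the
  first \<open>n - 1\<close> letters: both are governed by the blocks cut out by \<open>J \<union> {n - 1}\<close>, and inside
  each block the order of values only matters through descents at positions \<open>i \<noteq> v\<close>, where
  the rotation is increasing.\<close>

lemma image_mset_inv_des_head_des_subset:
  assumes n: "2 \<le> n" and J: "J \<subseteq> {1..n-2}" and v: "v \<in> {1..n}"
  shows "image_mset (inv_des n) (mset_set {\<sigma>. \<sigma> permutes {1..n} \<and> \<sigma> n = v \<and> head_des n \<sigma> \<subseteq> J})
       = image_mset (inv_des n) (mset_set {\<sigma>. \<sigma> permutes {1..n} \<and> \<sigma> n = v \<and> head_des n (rot_to_last n v \<circ> \<sigma>) \<subseteq> J})"
proof -
  define K where "K = insert (n-1) J"
  have K: "K \<subseteq> {1..n-1}" "n - 1 \<in> K" using J n unfolding K_def by (auto simp: subset_iff)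
  then have "finite K" using finite_subset by blast
  note K = K this
  have inj_rot: "inj_on (rot_to_last n v) {1..n}" using inj_on_rot_to_last[OF v] .
  define W where "W b = {i \<in> {1..n-1}. b (Suc i) < b i}" for b :: "nat \<Rightarrow> nat"
  have W_rot: "inv_des n \<sigma> = W (val_block K \<sigma>)"
    if \<sigma>: "\<sigma> \<in> block_incr n K (rot_to_last n v)" and last: "val_block K \<sigma> v = card K" for \<sigma>
    unfolding W_def
  proof (rule inv_des_eq_val_block_des[OF K(3) \<sigma>])
    fix i assume i: "i \<in> {1..n-1}" and same: "val_block K \<sigma> i = val_block K \<sigma> (Suc i)"
    have sp: "\<sigma> permutes {1..n}" using block_incr_permutes[OF \<sigma>] .
    have "i \<noteq> v"
    proof
      assume "i = v"
      have "Suc i \<in> {1..n}" using i by auto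
      have "\<sigma> n = v" using val_block_eq_card_iff[OF K(1,2) n sp v] last by simp
      moreover have "\<sigma> n = Suc i"
        using val_block_eq_card_iff[OF K(1,2) n sp \<open>Suc i \<in> {1..n}\<close>] last same \<open>i = v\<close> by simp
      ultimately show False using \<open>i = v\<close> by simp
    qed
    then show "rot_to_last n v i < rot_to_last n v (Suc i)" using rot_to_last_less_Suc[OF v i] by simp
  qed
  have W_id: "inv_des n \<sigma> = W (val_block K \<sigma>)" if "\<sigma> \<in> block_incr n K id" for \<sigma>
    unfolding W_def by (rule inv_des_eq_val_block_des[OF K(3) that]) simp
  show ?thesis
    using last_val_head_des_subset_eq_block_incr[OF n J v inj_on_id] last_val_head_des_subset_eq_block_incr[OF n J v inj_rot]
      image_mset_block_incr_eq[OF K(3) inj_on_id inj_rot, where Q = "\<lambda>b. b v = card K" and W = W and G = "inv_des n"]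
      W_id W_rot
    unfolding K_def by simp
qed

lemma image_mset_inv_des_last_val:
  assumes n: "2 \<le> n" and v: "v \<in> {1..n}" and S: "S \<subseteq> {1..n-2}"
  shows "image_mset (inv_des n) (mset_set {\<sigma>. \<sigma> permutes {1..n} \<and> \<sigma> n = v \<and> head_des n \<sigma> = S})
       = image_mset (inv_des n) (mset_set {\<sigma>. \<sigma> permutes {1..n} \<and> \<sigma> n = v \<and> head_des n (rot_to_last n v \<circ> \<sigma>) = S})"
proof (rule eq_if_sum_Pow_eq[of "{1..n-2}", OF _ _ S])
  fix J :: "nat set" assume J: "J \<subseteq> {1..n-2}"
  have sum: "image_mset (inv_des n) (mset_set {\<sigma>. \<sigma> permutes {1..n} \<and> \<sigma> n = v \<and> D \<sigma> \<subseteq> J})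
      = (\<Sum>S\<in>Pow J. image_mset (inv_des n) (mset_set {\<sigma>. \<sigma> permutes {1..n} \<and> \<sigma> n = v \<and> D \<sigma> = S}))" for D
  proof -
    have "mset_set {\<sigma>. \<sigma> permutes {1..n} \<and> \<sigma> n = v \<and> D \<sigma> \<subseteq> J}
        = (\<Sum>S\<in>Pow J. mset_set {\<sigma> \<in> {\<sigma>. \<sigma> permutes {1..n} \<and> \<sigma> n = v \<and> D \<sigma> \<subseteq> J}. D \<sigma> = S})"
      using J finite_subset by (intro mset_set_eq_sum_fibers finite_permutes_atLeastAtMost) auto
    also have "\<dots> = (\<Sum>S\<in>Pow J. mset_set {\<sigma>. \<sigma> permutes {1..n} \<and> \<sigma> n = v \<and> D \<sigma> = S})"
      by (rule sum.cong[OF refl]) (rule arg_cong[where f = mset_set], auto)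
    finally show ?thesis by (simp add: image_mset_sum)
  qed
  show "(\<Sum>S\<in>Pow J. image_mset (inv_des n) (mset_set {\<sigma>. \<sigma> permutes {1..n} \<and> \<sigma> n = v \<and> head_des n \<sigma> = S}))
      = (\<Sum>S\<in>Pow J. image_mset (inv_des n) (mset_set {\<sigma>. \<sigma> permutes {1..n} \<and> \<sigma> n = v \<and> head_des n (rot_to_last n v \<circ> \<sigma>) = S}))"
    using sum[of "head_des n"] sum[of "\<lambda>\<sigma>. head_des n (rot_to_last n v \<circ> \<sigma>)"]
      image_mset_inv_des_head_des_subset[OF n J v] by simp
qed simp

lemma image_mset_inv_des_des_class:
  assumes n: "2 \<le> n" and S: "S \<subseteq> {1..n-2}"
  shows "image_mset (inv_des n) (mset_set (des_class n S)) = image_mset (inv_des n) (mset_set (rot_des_class n S))"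
proof -
  have last: "\<sigma> n \<in> {1..n}" if "\<sigma> permutes {1..n}" for \<sigma>
    using permutes_imp_mem[OF that] n by simp
  have split: "image_mset (inv_des n) (mset_set {\<sigma>. \<sigma> permutes {1..n} \<and> D (\<sigma> n) \<sigma> = S})
      = (\<Sum>v\<in>{1..n}. image_mset (inv_des n) (mset_set {\<sigma>. \<sigma> permutes {1..n} \<and> \<sigma> n = v \<and> D v \<sigma> = S}))" for D
  proof -
    have "mset_set {\<sigma>. \<sigma> permutes {1..n} \<and> D (\<sigma> n) \<sigma> = S}
        = (\<Sum>v\<in>{1..n}. mset_set {\<sigma> \<in> {\<sigma>. \<sigma> permutes {1..n} \<and> D (\<sigma> n) \<sigma> = S}. \<sigma> n = v})"
      using last by (intro mset_set_eq_sum_fibers finite_permutes_atLeastAtMost) auto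
    also have "\<dots> = (\<Sum>v\<in>{1..n}. mset_set {\<sigma>. \<sigma> permutes {1..n} \<and> \<sigma> n = v \<and> D v \<sigma> = S})"
      by (rule sum.cong[OF refl]) (rule arg_cong[where f = mset_set], auto)
    finally show ?thesis by (simp add: image_mset_sum)
  qed
  show ?thesis
    using split[of "\<lambda>v \<sigma>. head_des n \<sigma>"] split[of "\<lambda>v \<sigma>. head_des n (rot_to_last n v \<circ> \<sigma>)"]
      image_mset_inv_des_last_val[OF n _ S]
    unfolding des_class_def rot_des_class_def by simp
qed

section \<open>Cyclic descents under rotation of values\<close>

lemma head_des_cong:
  assumes "\<And>x. x \<in> {1..n} \<Longrightarrow> \<tau> x = \<tau>' x"
  shows "head_des n \<tau> = head_des n \<tau>'"
  unfolding head_des_def using assms by auto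

text \<open>Composing with the cyclic shift of values only changes the comparisons involving the value
  \<open>n\<close>, which becomes \<open>1\<close>: the cyclic descent at the position \<open>q\<close> of \<open>n\<close> moves to the position before
  \<open>q\<close>.\<close>

lemma perm_cDes_cyc_perm_comp:
  assumes n: "2 \<le> n" and sp: "\<sigma> permutes {1..n}"
  defines "q \<equiv> inv \<sigma> n"
  shows "perm_cDes n (cyc_perm n \<circ> \<sigma>) = insert (inv (cyc_perm n) q) (perm_cDes n \<sigma> - {q})"
proof -
  define q' where "q' = inv (cyc_perm n) q"
  have q: "q \<in> {1..n}" "\<sigma> q = n"
    using n permutes_inv_imp_mem[OF sp] permutes_inverses(1)[OF sp] by (auto simp: q_def)
  have q': "q' \<in> {1..n}" "cyc_perm n q' = q"
    using permutes_inv_imp_mem[OF cyc_perm_permutes q(1)] permutes_inverses(1)[OF cyc_perm_permutes]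
    by (auto simp: q'_def)
  then have csucc_q': "csucc n q' = q" by (simp add: cyc_perm_def)
  have "p \<in> perm_cDes n (cyc_perm n \<circ> \<sigma>) \<longleftrightarrow> p \<in> perm_cDes n \<sigma> \<and> p \<noteq> q \<or> p = q'"
    if p: "p \<in> {1..n}" for p
  proof -
    define a b where "a = \<sigma> p" and "b = \<sigma> (csucc n p)"
    have ab: "a \<in> {1..n}" "b \<in> {1..n}" "a \<noteq> b"
      using permutes_imp_mem[OF sp] csucc_mem[OF p] csucc_neq[OF n p] permutes_inj[OF sp] p
      by (auto simp: a_def b_def inj_eq)
    have "a = n \<longleftrightarrow> p = q" unfolding a_def using q(2) permutes_inj[OF sp] by (metis injD)
    moreover have "b = n \<longleftrightarrow> csucc n p = q" unfolding b_def using q(2) permutes_inj[OF sp] by (metis injD)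
    then have "b = n \<longleftrightarrow> p = q'" using inj_onD[OF inj_on_csucc _ p q'(1)] csucc_q' by auto
    moreover have "p \<in> perm_cDes n (cyc_perm n \<circ> \<sigma>) \<longleftrightarrow> csucc n b < csucc n a"
      using p ab by (simp add: perm_cDes_def a_def b_def cyc_perm_def)
    moreover have "p \<in> perm_cDes n \<sigma> \<longleftrightarrow> b < a" using p by (simp add: perm_cDes_def a_def b_def)
    ultimately show ?thesis using ab by (auto simp: csucc_eq)
  qed
  moreover have "perm_cDes n \<sigma> \<subseteq> {1..n}" "perm_cDes n (cyc_perm n \<circ> \<sigma>) \<subseteq> {1..n}"
    by (auto simp: perm_cDes_def)
  ultimately show ?thesis using q'(1) unfolding q'_def[symmetric] by blast
qed

lemma card_perm_cDes_cyc_perm: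
  assumes n: "2 \<le> n" and sp: "\<sigma> permutes {1..n}"
  shows "card (perm_cDes n (cyc_perm n \<circ> \<sigma>)) = card (perm_cDes n \<sigma>)"
proof -
  define q q' where "q = inv \<sigma> n" and "q' = inv (cyc_perm n) q"
  have q: "q \<in> {1..n}" "\<sigma> q = n"
    using n permutes_inv_imp_mem[OF sp] permutes_inverses(1)[OF sp] by (auto simp: q_def)
  have q': "q' \<in> {1..n}" "csucc n q' = q"
    using permutes_inv_imp_mem[OF cyc_perm_permutes q(1)] permutes_inverses(1)[OF cyc_perm_permutes, of n q]
    by (auto simp: q'_def cyc_perm_def)
  have "\<sigma> (csucc n q) \<noteq> n"
    using q csucc_neq[OF n q(1)] permutes_inj[OF sp] by (metis injD)
  then have "q \<in> perm_cDes n \<sigma>"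
    using q permutes_imp_mem[OF sp csucc_mem[OF q(1)]] by (simp add: perm_cDes_def order_less_le)
  moreover have "q' \<notin> perm_cDes n \<sigma>"
    using q q' permutes_imp_mem[OF sp q'(1)] by (simp add: perm_cDes_def)
  moreover have "finite (perm_cDes n \<sigma>)" by (simp add: perm_cDes_def)
  moreover have "card (perm_cDes n \<sigma>) > 0" using calculation by (auto simp: card_gt_0_iff)
  ultimately show ?thesis
    using perm_cDes_cyc_perm_comp[OF n sp] by (simp add: q_def[symmetric] q'_def[symmetric] card_Suc_Diff1)
qed

lemma card_perm_cDes_funpow:
  assumes n: "2 \<le> n" and sp: "\<sigma> permutes {1..n}"
  shows "card (perm_cDes n ((cyc_perm n ^^ j) \<circ> \<sigma>)) = card (perm_cDes n \<sigma>)"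
proof (induction j)
  case 0 then show ?case by simp
next
  case (Suc j)
  have p: "(cyc_perm n ^^ j) \<circ> \<sigma> permutes {1..n}" using permutes_compose[OF sp funpow_cyc_perm_permutes] .
  have eq: "(cyc_perm n ^^ Suc j) \<circ> \<sigma> = cyc_perm n \<circ> ((cyc_perm n ^^ j) \<circ> \<sigma>)" by (simp only: funpow.simps(2) comp_assoc)
  show ?case unfolding eq card_perm_cDes_cyc_perm[OF n p] using Suc.IH .
qed

lemma perm_cDes_last_fixed:
  assumes n: "2 \<le> n" and tp: "\<tau> permutes {1..n}" and tn: "\<tau> n = n"
  shows "perm_cDes n \<tau> = insert n (head_des n \<tau>)"
proof -
  have less_n: "\<tau> i < n" if "i \<in> {1..n-1}" for i
  proof -
    have "i \<noteq> n" using that n by auto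
    then have "\<tau> i \<noteq> \<tau> n" using permutes_inj[OF tp] by (simp add: inj_eq)
    moreover have "\<tau> i \<in> {1..n}" using permutes_imp_mem[OF tp] that by auto
    ultimately show ?thesis using tn by auto
  qed
  have "i \<in> perm_cDes n \<tau> \<longleftrightarrow> i \<in> insert n (head_des n \<tau>)" if i: "i \<in> {1..n}" for i
  proof (cases "i = n")
    case True
    then show ?thesis using less_n[of 1] n tn by (simp add: perm_cDes_def csucc_def)
  next
    case False
    then have "csucc n i = Suc i" using i by (simp add: csucc_eq)
    moreover have "i \<le> n - 2 \<or> \<not> \<tau> (Suc i) < \<tau> i"
    proof (cases "i = n - 1")
      case True
      then have "Suc i = n" using n by simp
      then show ?thesis using less_n[of i] i tn True by simp
    qed (use i False in auto)
    ultimately show ?thesis using i False by (auto simp: perm_cDes_def head_des_def)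
  qed
  moreover have "insert n (head_des n \<tau>) \<subseteq> {1..n}" using n by (auto simp: head_des_def)
  ultimately show ?thesis unfolding perm_cDes_def by blast
qed

lemma card_perm_cDes_eq_Suc_card_head_des:
  assumes n: "2 \<le> n" and sp: "\<sigma> permutes {1..n}"
  shows "card (perm_cDes n \<sigma>) = Suc (card (head_des n (rot_to_last n (\<sigma> n) \<circ> \<sigma>)))"
proof -
  define v where "v = \<sigma> n"
  have v: "v \<in> {1..n}" using permutes_imp_mem[OF sp, of n] n by (simp add: v_def)
  define \<tau> where "\<tau> = (cyc_perm n ^^ (n - v)) \<circ> \<sigma>"
  have tp: "\<tau> permutes {1..n}" unfolding \<tau>_def using permutes_compose[OF sp funpow_cyc_perm_permutes] .
  have agree: "\<tau> x = (rot_to_last n v \<circ> \<sigma>) x" if "x \<in> {1..n}" for x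
    using rot_to_last_eq_funpow[OF v permutes_imp_mem[OF sp that]] by (simp add: \<tau>_def)
  have "\<tau> n = n" using agree[of n] rot_to_last_eq[OF v v] n by (simp add: v_def)
  have "card (perm_cDes n \<sigma>) = card (perm_cDes n \<tau>)"
    unfolding \<tau>_def by (rule card_perm_cDes_funpow[OF n sp, symmetric])
  also have "\<dots> = Suc (card (head_des n \<tau>))"
  proof -
    have "n \<notin> head_des n \<tau>" "finite (head_des n \<tau>)" using n by (auto simp: head_des_def)
    then show ?thesis using perm_cDes_last_fixed[OF n tp \<open>\<tau> n = n\<close>] by simp
  qed
  also have "head_des n \<tau> = head_des n (rot_to_last n v \<circ> \<sigma>)" by (rule head_des_cong) (rule agree)
  finally show ?thesis by (simp add: v_def)
qed

lemma rot_des_class_cyc_perm: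
  assumes n: "2 \<le> n" and s: "\<sigma> \<in> rot_des_class n S"
  shows "cyc_perm n \<circ> \<sigma> \<in> rot_des_class n S"
proof -
  have sp: "\<sigma> permutes {1..n}" using s by (simp add: rot_des_class_def)
  have n1: "n \<in> {1..n}" using n by simp
  have p: "cyc_perm n \<circ> \<sigma> permutes {1..n}" using permutes_compose[OF sp cyc_perm_permutes] .
  have "head_des n (rot_to_last n ((cyc_perm n \<circ> \<sigma>) n) \<circ> (cyc_perm n \<circ> \<sigma>)) = head_des n (rot_to_last n (\<sigma> n) \<circ> \<sigma>)"
  proof (rule head_des_cong)
    fix x assume x: "x \<in> {1..n}"
    show "(rot_to_last n ((cyc_perm n \<circ> \<sigma>) n) \<circ> (cyc_perm n \<circ> \<sigma>)) x = (rot_to_last n (\<sigma> n) \<circ> \<sigma>) x"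
      using rot_to_last_cyc_perm[OF permutes_imp_mem[OF sp n1] permutes_imp_mem[OF sp x]] by simp
  qed
  then show ?thesis using s p by (simp add: rot_des_class_def)
qed

lemma perm_cDes_comp_inv_cyc_perm:
  "perm_cDes n (\<pi> \<circ> inv (cyc_perm n)) = cshift n (perm_cDes n \<pi>)"
proof -
  have cp: "cyc_perm n permutes {1..n}" by (rule cyc_perm_permutes)
  have inv_csucc: "inv (cyc_perm n) (csucc n j) = j" if "j \<in> {1..n}" for j
    using permutes_inverses(2)[OF cp, of j] that by (simp add: cyc_perm_def)
  have csucc_inv: "csucc n (inv (cyc_perm n) i) = i" and inv_mem: "inv (cyc_perm n) i \<in> {1..n}"
    if "i \<in> {1..n}" for i
    using permutes_inverses(1)[OF cp, of i] permutes_inv_imp_mem[OF cp that] by (simp_all add: cyc_perm_def)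
  show ?thesis
  proof (intro set_eqI iffI)
    fix i assume i: "i \<in> perm_cDes n (\<pi> \<circ> inv (cyc_perm n))"
    define j where "j = inv (cyc_perm n) i"
    have j: "j \<in> {1..n}" "csucc n j = i" using i inv_mem csucc_inv by (auto simp: j_def perm_cDes_def)
    then have "j \<in> perm_cDes n \<pi>"
      using i inv_csucc[OF csucc_mem[OF j(1)]] by (auto simp: perm_cDes_def j_def)
    then show "i \<in> cshift n (perm_cDes n \<pi>)" using j(2) unfolding cshift_def by blast
  next
    fix i assume "i \<in> cshift n (perm_cDes n \<pi>)"
    then obtain j where j: "j \<in> perm_cDes n \<pi>" "i = csucc n j" unfolding cshift_def by blast
    then have "j \<in> {1..n}" by (simp add: perm_cDes_def)
    then show "i \<in> perm_cDes n (\<pi> \<circ> inv (cyc_perm n))"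
      using j csucc_mem inv_csucc csucc_mem[OF csucc_mem] by (auto simp: perm_cDes_def)
  qed
qed

lemma perm_cDes_inv_cyc_perm:
  assumes sp: "\<sigma> permutes {1..n}"
  shows "perm_cDes n (inv (cyc_perm n \<circ> \<sigma>)) = cshift n (perm_cDes n (inv \<sigma>))"
  using o_inv_distrib[OF permutes_bij[OF cyc_perm_permutes] permutes_bij[OF sp]] perm_cDes_comp_inv_cyc_perm
  by simp

lemma image_mset_cshift_rot_des_class:
  assumes n: "2 \<le> n"
  shows "image_mset (cshift n \<circ> (\<lambda>\<sigma>. perm_cDes n (inv \<sigma>))) (mset_set (rot_des_class n S))
       = image_mset (\<lambda>\<sigma>. perm_cDes n (inv \<sigma>)) (mset_set (rot_des_class n S))"
proof -
  define \<Gamma> where "\<Gamma> = (\<lambda>\<sigma>::nat \<Rightarrow> nat. cyc_perm n \<circ> \<sigma>)"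
  have fin: "finite (rot_des_class n S)" unfolding rot_des_class_def by (rule finite_permutes_atLeastAtMost)
  have inj: "inj_on \<Gamma> (rot_des_class n S)"
  proof (rule inj_onI)
    fix \<sigma> \<tau> assume "\<Gamma> \<sigma> = \<Gamma> \<tau>"
    then have "cyc_perm n (\<sigma> x) = cyc_perm n (\<tau> x)" for x unfolding \<Gamma>_def by (metis comp_apply)
    then show "\<sigma> = \<tau>" using injD[OF permutes_inj[OF cyc_perm_permutes]] by blast
  qed
  have img: "\<Gamma> ` rot_des_class n S = rot_des_class n S"
    by (rule endo_inj_surj[OF fin _ inj]) (use rot_des_class_cyc_perm[OF n] in \<open>auto simp: \<Gamma>_def\<close>)
  have "image_mset (cshift n \<circ> (\<lambda>\<sigma>. perm_cDes n (inv \<sigma>))) (mset_set (rot_des_class n S))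
      = image_mset ((\<lambda>\<sigma>. perm_cDes n (inv \<sigma>)) \<circ> \<Gamma>) (mset_set (rot_des_class n S))"
  proof (rule image_mset_cong)
    fix \<sigma> assume "\<sigma> \<in># mset_set (rot_des_class n S)"
    then have "\<sigma> permutes {1..n}" using fin by (simp add: rot_des_class_def)
    then show "(cshift n \<circ> (\<lambda>\<sigma>. perm_cDes n (inv \<sigma>))) \<sigma> = ((\<lambda>\<sigma>. perm_cDes n (inv \<sigma>)) \<circ> \<Gamma>) \<sigma>"
      using perm_cDes_inv_cyc_perm by (simp add: \<Gamma>_def)
  qed
  also have "\<dots> = image_mset (\<lambda>\<sigma>. perm_cDes n (inv \<sigma>)) (image_mset \<Gamma> (mset_set (rot_des_class n S)))"
    by (simp only: multiset.map_comp)
  also have "image_mset \<Gamma> (mset_set (rot_des_class n S)) = mset_set (rot_des_class n S)"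
    using image_mset_mset_set[OF inj] img by simp
  finally show ?thesis .
qed

lemma perm_cDes_inv_proper:
  assumes n: "2 \<le> n" and sp: "\<sigma> permutes {1..n}"
  shows "perm_cDes n (inv \<sigma>) \<subseteq> {1..n} \<and> perm_cDes n (inv \<sigma>) \<noteq> {} \<and> perm_cDes n (inv \<sigma>) \<noteq> {1..n}"
proof (intro conjI)
  define \<pi> where "\<pi> = inv \<sigma>"
  have pp: "\<pi> permutes {1..n}" using permutes_inv[OF sp] by (simp add: \<pi>_def)
  show "perm_cDes n (inv \<sigma>) \<subseteq> {1..n}" unfolding perm_cDes_def by auto
  have n1: "n \<in> {1..n}" and o1: "(1::nat) \<in> {1..n}" using n by auto
  define j where "j = \<sigma> n"
  have j: "j \<in> {1..n}" "\<pi> j = n" using permutes_imp_mem[OF sp n1] permutes_inverses(2)[OF sp] by (auto simp: j_def \<pi>_def)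
  have cj: "csucc n j \<in> {1..n}" using csucc_mem[OF j(1)] .
  have "\<pi> (csucc n j) \<noteq> n" using injD[OF permutes_inj[OF pp], of "csucc n j" j] j(2) csucc_neq[OF n j(1)] by auto
  then have "\<pi> (csucc n j) < \<pi> j" using permutes_imp_mem[OF pp cj] j(2) by simp
  then have "j \<in> perm_cDes n (inv \<sigma>)" using j(1) unfolding perm_cDes_def \<pi>_def by simp
  then show "perm_cDes n (inv \<sigma>) \<noteq> {}" by auto
  define j1 where "j1 = \<sigma> 1"
  have j1: "j1 \<in> {1..n}" "\<pi> j1 = 1" using permutes_imp_mem[OF sp o1] permutes_inverses(2)[OF sp] by (auto simp: j1_def \<pi>_def)
  have "\<pi> (csucc n j1) \<in> {1..n}" using permutes_imp_mem[OF pp csucc_mem[OF j1(1)]] .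
  then have "j1 \<notin> perm_cDes n (inv \<sigma>)" using j1 unfolding perm_cDes_def \<pi>_def by auto
  then show "perm_cDes n (inv \<sigma>) \<noteq> {1..n}" using j1(1) by blast
qed

lemma perm_cDes_inv_restrict: "perm_cDes n (inv \<sigma>) \<inter> {1..n-1} = inv_des n \<sigma>"
proof -
  have "csucc n i = Suc i" if "i \<in> {1..n-1}" for i using that by (auto simp: csucc_def)
  then show ?thesis unfolding perm_cDes_def inv_des_def by auto
qed

lemma image_mset_perm_cDes_C_set_eq_inv:
  "image_mset (perm_cDes n) (mset_set (C_set n k))
     = image_mset (\<lambda>\<sigma>. perm_cDes n (inv \<sigma>)) (mset_set {\<sigma>. \<sigma> permutes {1..n} \<and> card (perm_cDes n \<sigma>) = k})"
proof -
  let ?C = "{\<sigma>. \<sigma> permutes {1..n} \<and> card (perm_cDes n \<sigma>) = k}"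
  have "inj_on inv ?C"
    by (rule inj_onI) (metis (no_types, lifting) mem_Collect_eq permutes_inv_inv)
  moreover have "C_set n k = inv ` ?C"
  proof (intro set_eqI iffI)
    fix \<pi> assume "\<pi> \<in> C_set n k"
    then have "\<pi> permutes {1..n}" "inv \<pi> \<in> ?C" by (auto simp: C_set_def permutes_inv)
    then show "\<pi> \<in> inv ` ?C" using permutes_inv_inv by (metis image_eqI)
  next
    fix \<pi> assume "\<pi> \<in> inv ` ?C"
    then show "\<pi> \<in> C_set n k" by (auto simp: C_set_def permutes_inv permutes_inv_inv)
  qed
  ultimately show ?thesis by (simp add: image_mset_mset_set[symmetric] multiset.map_comp comp_def)
qed

lemma card_perm_cDes_head_des_fiber:
  assumes n: "2 \<le> n" and k: "1 \<le> k" and S: "card S = k - 1"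
  shows "{\<sigma> \<in> {\<sigma>. \<sigma> permutes {1..n} \<and> card (perm_cDes n \<sigma>) = k}. head_des n (rot_to_last n (\<sigma> n) \<circ> \<sigma>) = S}
       = rot_des_class n S"
  using card_perm_cDes_eq_Suc_card_head_des[OF n] S k by (auto simp: rot_des_class_def)

lemma image_mset_perm_cDes_C_set:
  assumes n: "2 \<le> n" and k: "1 \<le> k"
  shows "image_mset (perm_cDes n) (mset_set (C_set n k))
       = (\<Sum>S\<in>{S. S \<subseteq> {1..n-2} \<and> card S = k - 1}. image_mset (\<lambda>\<sigma>. perm_cDes n (inv \<sigma>)) (mset_set (rot_des_class n S)))"
proof -
  let ?C = "{\<sigma>. \<sigma> permutes {1..n} \<and> card (perm_cDes n \<sigma>) = k}"
  let ?I = "{S. S \<subseteq> {1..n-2} \<and> card S = k - 1}"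
  have "finite ?I" by (rule finite_subset[of _ "Pow {1..n-2}"]) auto
  moreover have "head_des n (rot_to_last n (\<sigma> n) \<circ> \<sigma>) \<in> ?I" if "\<sigma> \<in> ?C" for \<sigma>
    using that card_perm_cDes_eq_Suc_card_head_des[OF n] by (auto simp: head_des_def)
  ultimately have "mset_set ?C = (\<Sum>S\<in>?I. mset_set {\<sigma> \<in> ?C. head_des n (rot_to_last n (\<sigma> n) \<circ> \<sigma>) = S})"
    by (intro mset_set_eq_sum_fibers finite_permutes_atLeastAtMost)
  also have "\<dots> = (\<Sum>S\<in>?I. mset_set (rot_des_class n S))"
    using card_perm_cDes_head_des_fiber[OF n k] by simp
  finally show ?thesis
    unfolding image_mset_perm_cDes_C_set_eq_inv by (simp add: image_mset_sum)
qed

section \<open>A disconnected skew shape for each descent class\<close>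

text \<open>For \<open>S \<subseteq> {1..n-2}\<close> with \<open>h\<close> elements, the positions \<open>1, \<dots>, n - 1\<close> fall into the blocks
  \<open>0, \<dots>, h\<close> cut out by \<open>S\<close>. Position \<open>p < n\<close> in block \<open>t\<close> is put into row \<open>h + 1 - t\<close> and
  column \<open>p - t\<close>: a block fills a row from left to right, and the next block starts directly above
  the last cell of the previous one. Position \<open>n\<close> is a single cell in row \<open>0\<close>, diagonally above
  the end of this ribbon, so the shape is never a connected ribbon. Reading a standard Young
  tableau position by position gives exactly the permutations whose first \<open>n - 1\<close> letters have
  descent set \<open>S\<close>, and its descents are the inverse descents of that permutation.\<close>

locale ribbon_with_cell =
  fixes n :: nat and S :: "nat set"
  assumes two_le_n: "2 \<le> n" and S_subset: "S \<subseteq> {1..n-2}"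
begin

definition h :: nat where
  "h = card S"

text \<open>\<open>block_end t\<close> is the last position of block \<open>t - 1\<close>, so block \<open>t\<close> consists of the positions
  \<open>block_end t < p \<le> block_end (t + 1)\<close>.\<close>

definition block_end :: "nat \<Rightarrow> nat" where
  "block_end t = block_start (n - 1) S t"

definition cell :: "nat \<Rightarrow> nat \<times> nat" where
  "cell p = (if p = n then (0, n - h) else (h + 1 - block_idx S p, p - block_idx S p))"

text \<open>Row \<open>r \<ge> 1\<close> carries block \<open>t = h + 1 - r\<close>, in the columns \<open>block_end t - t + 1, \<dots>, block_end (t + 1) - t\<close>.\<close>

definition lam_row :: "nat \<Rightarrow> nat" where
  "lam_row r = (if r = 0 then n - h + 1 else block_end (h + 2 - r) - (h + 1 - r) + 1)"

definition mu_row :: "nat \<Rightarrow> nat" where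
  "mu_row r = (if r = 0 then n - h else block_end (h + 1 - r) - (h + 1 - r) + 1)"

definition lam :: "nat list" where
  "lam = map lam_row [0..<h+2]"

definition mu :: "nat list" where
  "mu = map mu_row [0..<h+2]"

lemma finite_S: "finite S"
  using S_subset finite_subset by blast

lemma h_le: "h \<le> n - 2"
  unfolding h_def using card_mono[OF _ S_subset] by simp

lemma block_idx_le_pred: "block_idx S p \<le> p - 1"
proof -
  have "{j \<in> S. j < p} \<subseteq> {1..<p}" using S_subset by auto
  then show ?thesis unfolding block_idx_def using card_mono[of "{1..<p}"] by fastforce
qed

lemma block_idx_le_h: "block_idx S p \<le> h"
  unfolding block_idx_def h_def by (rule card_mono[OF finite_S]) auto

lemma block_idx_top: "n - 1 \<le> p \<Longrightarrow> block_idx S p = h"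
proof -
  assume p: "n - 1 \<le> p"
  have "{j \<in> S. j < p} = S"
  proof (intro set_eqI iffI)
    fix j assume "j \<in> S"
    then have "j \<le> n - 2" using S_subset by auto
    then show "j \<in> {j \<in> S. j < p}" using \<open>j \<in> S\<close> p two_le_n by auto
  qed simp
  then show ?thesis unfolding block_idx_def h_def by simp
qed

lemma block_idx_one: "block_idx S 1 = 0"
proof -
  have "{j \<in> S. j < 1} = {}" using S_subset by auto
  then show ?thesis unfolding block_idx_def by simp
qed

lemma block_idx_Suc_S: "block_idx S (Suc p) = block_idx S p + (if p \<in> S then 1 else 0)"
  using block_idx_Suc[OF finite_S] .

lemma block_idx_mono_S: "p \<le> q \<Longrightarrow> block_idx S p \<le> block_idx S q"
  using block_idx_mono[OF finite_S] .

lemma block_end_iff: "p \<in> {1..n-1} \<Longrightarrow> block_idx S p < t \<longleftrightarrow> p \<le> block_end t"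
  unfolding block_end_def using block_idx_less_iff[OF finite_S] .

lemma block_end_ge: "t \<le> n - 1 \<Longrightarrow> t \<le> block_end t"
proof -
  assume t: "t \<le> n - 1"
  have "{1..t} \<subseteq> {p \<in> {1..n-1}. block_idx S p < t}"
  proof
    fix p assume p: "p \<in> {1..t}"
    have "block_idx S p \<le> p - 1" by (rule block_idx_le_pred)
    then show "p \<in> {p \<in> {1..n-1}. block_idx S p < t}" using p t by auto
  qed
  then have "card {1..t} \<le> card {p \<in> {1..n-1}. block_idx S p < t}" by (intro card_mono) auto
  then show ?thesis unfolding block_end_def block_start_def by simp
qed

lemma block_end_le: "block_end t \<le> n - 1"
  unfolding block_end_def by (rule block_start_le)

lemma block_end_mono: "t \<le> t' \<Longrightarrow> block_end t \<le> block_end t'"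
  unfolding block_end_def by (rule block_start_mono)

lemma block_end_Suc_h: "block_end (Suc h) = n - 1"
proof -
  have "{p \<in> {1..n-1}. block_idx S p < Suc h} = {1..n-1}" using block_idx_le_h by (auto simp: less_Suc_eq_le)
  then show ?thesis unfolding block_end_def block_start_def by simp
qed

lemma block_idx_surj:
  assumes "t \<le> h"
  obtains p where "1 \<le> p" "p \<le> n - 1" "block_idx S p = t"
proof -
  have "\<exists>p. 1 \<le> p \<and> p \<le> n - 1 \<and> int (block_idx S p) = int t"
    by (rule nat_intermed_int_val)
       (use assms block_idx_one block_idx_top[of "n - 1"] two_le_n in \<open>auto simp: block_idx_Suc_S\<close>)
  then show thesis using that by auto
qed

lemma block_end_strict: "t \<le> h \<Longrightarrow> block_end t < block_end (Suc t)"
proof -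
  assume t: "t \<le> h"
  obtain p where p: "1 \<le> p" "p \<le> n - 1" "block_idx S p = t" using block_idx_surj[OF t] .
  have pi: "p \<in> {1..n-1}" using p by simp
  have "p \<le> block_end (Suc t)" using block_end_iff[OF pi, of "Suc t"] p(3) by simp
  moreover have "\<not> p \<le> block_end t" using block_end_iff[OF pi, of t] p(3) by simp
  ultimately show ?thesis by simp
qed

lemma len_lam: "length lam = h + 2"
  by (simp add: lam_def)

lemma len_mu: "length mu = h + 2"
  by (simp add: mu_def)

lemma nth_lam: "r < h + 2 \<Longrightarrow> lam ! r = lam_row r"
  unfolding lam_def by (subst nth_map_upt) auto

lemma nth_mu: "r < h + 2 \<Longrightarrow> mu ! r = mu_row r"
  unfolding mu_def by (subst nth_map_upt) auto

lemma part_at_lam: "part_at lam r = (if r < h + 2 then lam_row r else 0)"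
  using nth_lam len_lam by (simp add: part_at_def)

lemma part_at_mu: "part_at mu r = (if r < h + 2 then mu_row r else 0)"
  using nth_mu len_mu by (simp add: part_at_def)

lemma lam_row_antimono: "Suc r < h + 2 \<Longrightarrow> lam_row (Suc r) \<le> lam_row r"
proof -
  assume r: "Suc r < h + 2"
  show ?thesis
  proof (cases "r = 0")
    case True
    then show ?thesis using block_end_Suc_h h_le two_le_n by (simp add: lam_row_def)
  next
    case False
    define t where "t = h + 1 - r"
    have t1: "1 \<le> t" "t \<le> h" using r False by (auto simp: t_def)
    have e1: "h + 2 - Suc r = t" "h + 1 - Suc r = t - 1" "h + 2 - r = Suc t" "h + 1 - r = t"
      using r False by (auto simp: t_def)
    have s: "block_end (t - 1) < block_end t" using block_end_strict[of "t - 1"] t1 by simp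
    have s2: "block_end t < block_end (Suc t)" using block_end_strict t1 by simp
    have g: "t - 1 \<le> block_end (t - 1)" "t \<le> block_end t" using block_end_ge h_le t1 by auto
    have "block_end t - (t - 1) \<le> block_end (Suc t) - t" using s2 g t1 by arith
    then show ?thesis unfolding lam_row_def using False e1 by simp
  qed
qed

lemma mu_row_antimono: "Suc r < h + 2 \<Longrightarrow> mu_row (Suc r) \<le> mu_row r"
proof -
  assume r: "Suc r < h + 2"
  show ?thesis
  proof (cases "r = 0")
    case True
    then show ?thesis using block_end_le[of h] block_end_ge[of h] h_le two_le_n by (simp add: mu_row_def)
  next
    case False
    define t where "t = h + 1 - r"
    have t1: "1 \<le> t" "t \<le> h" using r False by (auto simp: t_def)
    have e1: "h + 1 - Suc r = t - 1" "h + 1 - r = t"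
      using r False by (auto simp: t_def)
    have s: "block_end (t - 1) < block_end t" using block_end_strict[of "t - 1"] t1 by simp
    have g: "t - 1 \<le> block_end (t - 1)" "t \<le> block_end t" using block_end_ge h_le t1 by auto
    have "block_end (t - 1) - (t - 1) \<le> block_end t - t" using s g t1 by arith
    then show ?thesis unfolding mu_row_def using False e1 by simp
  qed
qed

lemma mu_row_le_lam_row: "mu_row r \<le> lam_row r"
proof (cases "r = 0")
  case True then show ?thesis by (simp add: mu_row_def lam_row_def)
next
  case False
  have "block_end (h + 1 - r) \<le> block_end (h + 2 - r)" by (rule block_end_mono) simp
  then show ?thesis using False by (simp add: mu_row_def lam_row_def)
qed

lemma skew_shape_lam_mu: "skew_shape lam mu"
proof -
  have p1: "is_partition lam"
    unfolding is_partition_def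
  proof
    show "sorted_wrt (\<ge>) lam"
      by (subst sorted_wrt_iff_nth_Suc_transp) (auto simp: transp_def len_lam nth_lam lam_row_antimono)
    show "\<forall>x\<in>set lam. 0 < x" by (auto simp: lam_def lam_row_def)
  qed
  have p2: "is_partition mu"
    unfolding is_partition_def
  proof
    show "sorted_wrt (\<ge>) mu"
      by (subst sorted_wrt_iff_nth_Suc_transp) (auto simp: transp_def len_mu nth_mu mu_row_antimono)
    show "\<forall>x\<in>set mu. 0 < x" using h_le two_le_n by (auto simp: mu_def mu_row_def)
  qed
  have "\<forall>i < length mu. mu ! i \<le> lam ! i" using mu_row_le_lam_row nth_lam nth_mu len_mu by simp
  then show ?thesis unfolding skew_shape_def using p1 p2 len_lam len_mu by simp
qed

lemma cell_n: "cell n = (0, n - h)"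
  by (simp add: cell_def)

lemma cell_less_n: "p \<noteq> n \<Longrightarrow> cell p = (h + 1 - block_idx S p, p - block_idx S p)"
  by (simp add: cell_def)

lemma cell_in_cells: "p \<in> {1..n} \<Longrightarrow> cell p \<in> cells lam mu"
proof -
  assume p: "p \<in> {1..n}"
  show ?thesis
  proof (cases "p = n")
    case True
    have "cell p = (0, n - h)" using True cell_n by simp
    then show ?thesis unfolding cells_def len_lam part_at_lam part_at_mu
      by (simp add: lam_row_def mu_row_def)
  next
    case False
    define t where "t = block_idx S p"
    have pi: "p \<in> {1..n-1}" using p False by auto
    have th: "t \<le> h" using block_idx_le_h t_def by simp
    have tp: "t \<le> p - 1" using block_idx_le_pred t_def by simp
    have a1: "\<not> p \<le> block_end t" using block_end_iff[OF pi, of t] t_def by simp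
    have a2: "p \<le> block_end (Suc t)" using block_end_iff[OF pi, of "Suc t"] t_def by simp
    have ag: "t \<le> block_end t" using block_end_ge[of t] th h_le two_le_n by simp
    define r where "r = h + 1 - t"
    have r: "r \<noteq> 0" "r < h + 2" "h + 1 - r = t" "h + 2 - r = Suc t" using th by (auto simp: r_def)
    have "mu_row r = block_end t - t + 1" "lam_row r = block_end (Suc t) - t + 1" using r by (simp_all add: mu_row_def lam_row_def)
    then have "mu_row r \<le> p - t" "p - t < lam_row r" using a1 a2 ag tp pi by auto
    then show ?thesis unfolding cells_def cell_less_n[OF False] len_lam part_at_lam part_at_mu
      using r by (simp add: t_def r_def)
  qed
qed

lemma cells_subset: "cells lam mu \<subseteq> cell ` {1..n}"
proof
  fix x assume x: "x \<in> cells lam mu"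
  obtain i j where ij: "x = (i, j)" by (cases x)
  have i: "i < h + 2" "mu_row i \<le> j" "j < lam_row i" using x unfolding ij cells_def len_lam part_at_lam part_at_mu
    by (auto split: if_splits)
  show "x \<in> cell ` {1..n}"
  proof (cases "i = 0")
    case True
    then have "j = n - h" using i by (simp add: mu_row_def lam_row_def)
    then have "x = cell n" using True ij cell_n by simp
    then show ?thesis using two_le_n by auto
  next
    case False
    define t where "t = h + 1 - i"
    have th: "t \<le> h" "h + 1 - t = i" using i(1) False by (auto simp: t_def)
    have mu_i: "mu_row i = block_end t - t + 1" and la_i: "lam_row i = block_end (Suc t) - t + 1"
      using False i(1) by (simp_all add: mu_row_def lam_row_def t_def Suc_diff_le)
    have ag: "t \<le> block_end t" using block_end_ge[of t] th h_le two_le_n by simp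
    define p where "p = j + t"
    have p1: "block_end t < p" "p \<le> block_end (Suc t)" using i(2,3) mu_i la_i ag by (auto simp: p_def)
    have pn: "p \<le> n - 1" using p1(2) block_end_le[of "Suc t"] by simp
    have pge: "1 \<le> p" using p1(1) by simp
    have pi: "p \<in> {1..n-1}" using pn pge by simp
    have "block_idx S p < Suc t" using block_end_iff[OF pi] p1(2) by simp
    moreover have "\<not> block_idx S p < t" using block_end_iff[OF pi] p1(1) by simp
    ultimately have ut: "block_idx S p = t" by simp
    have pnn: "p \<noteq> n" using pn two_le_n by simp
    have "cell p = (i, j)" using cell_less_n[OF pnn] ut th by (simp add: p_def)
    then show ?thesis using ij pi two_le_n by force
  qed
qed

lemma cells_eq_image: "cells lam mu = cell ` {1..n}"
  using cells_subset cell_in_cells by blast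

lemma inj_on_cell: "inj_on cell {1..n}"
proof (rule inj_onI)
  fix p q assume p: "p \<in> {1..n}" and q: "q \<in> {1..n}" and e: "cell p = cell q"
  have up: "block_idx S p \<le> h" "block_idx S q \<le> h" using block_idx_le_h by auto
  show "p = q"
  proof (cases "p = n")
    case True
    show ?thesis
    proof (rule ccontr)
      assume "p \<noteq> q"
      then have "q \<noteq> n" using True by simp
      then show False using e True cell_n cell_less_n up by auto
    qed
  next
    case False
    show ?thesis
    proof (cases "q = n")
      case True then show ?thesis using e False cell_n cell_less_n up by auto
    next
      case False
      then have "h + 1 - block_idx S p = h + 1 - block_idx S q" "p - block_idx S p = q - block_idx S q"
        using e cell_less_n \<open>p \<noteq> n\<close> by auto
      then have "block_idx S p = block_idx S q" using up by simp
      moreover have "block_idx S p \<le> p - 1" "block_idx S q \<le> q - 1" using block_idx_le_pred by auto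
      ultimately show ?thesis using \<open>p - block_idx S p = q - block_idx S q\<close> p q by auto
    qed
  qed
qed

lemma card_cells_eq: "card (cells lam mu) = n"
  unfolding cells_eq_image using card_image[OF inj_on_cell] by simp

lemma col_mono: "1 \<le> p \<Longrightarrow> p \<le> q \<Longrightarrow> p - block_idx S p \<le> q - block_idx S q"
proof (induction q)
  case 0 then show ?case by simp
next
  case (Suc q)
  show ?case
  proof (cases "p = Suc q")
    case True then show ?thesis by simp
  next
    case False
    then have ih: "p - block_idx S p \<le> q - block_idx S q" using Suc by simp
    have "block_idx S q \<le> q - 1" by (rule block_idx_le_pred)
    moreover have "block_idx S (Suc q) \<le> block_idx S q + 1" using block_idx_Suc_S[of q] by simp
    ultimately have "q - block_idx S q \<le> Suc q - block_idx S (Suc q)" using Suc.prems False by arith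
    then show ?thesis using ih by simp
  qed
qed

lemma col_bound: "p \<in> {1..n-1} \<Longrightarrow> p - block_idx S p \<le> n - 1 - h"
  using col_mono[of p "n - 1"] block_idx_top[of "n-1"] by simp

lemma des_class_mono_on_row:
  assumes s: "\<sigma> \<in> des_class n S" and p: "p1 < p2" "p1 \<in> {1..n}" "p2 \<in> {1..n}"
    and e: "fst (cell p1) = fst (cell p2)"
  shows "\<sigma> p1 < \<sigma> p2"
proof -
  have sp: "\<sigma> permutes {1..n}" and ld: "head_des n \<sigma> = S" using s by (auto simp: des_class_def)
  have p1n: "p1 \<noteq> n" using p by auto
  have p2n: "p2 \<noteq> n"
  proof
    assume "p2 = n"
    then have "fst (cell p1) = 0" using e cell_n by simp
    then show False using cell_less_n[OF p1n] block_idx_le_h[of p1] by simp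
  qed
  have "h + 1 - block_idx S p1 = h + 1 - block_idx S p2" using e cell_less_n[OF p1n] cell_less_n[OF p2n] by simp
  then have ue: "block_idx S p1 = block_idx S p2" using block_idx_le_h[of p1] block_idx_le_h[of p2] by simp
  show ?thesis
  proof (rule less_of_Suc_steps[OF _ p(1)])
    fix r assume r: "p1 \<le> r" "r < p2"
    have rS: "r \<notin> S"
    proof
      assume "r \<in> S"
      then have "block_idx S (Suc r) = block_idx S r + 1" using block_idx_Suc_S[of r] by simp
      moreover have "block_idx S p1 \<le> block_idx S r" using block_idx_mono_S r(1) by simp
      moreover have "block_idx S (Suc r) \<le> block_idx S p2" using block_idx_mono_S r(2) by simp
      ultimately show False using ue by simp
    qed
    have r1: "r \<in> {1..n-2}" using r p p2n by auto
    have "r \<notin> head_des n \<sigma>" using rS ld by simp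
    then have "\<not> \<sigma> (Suc r) < \<sigma> r" using r1 unfolding head_des_def by simp
    moreover have "\<sigma> (Suc r) \<noteq> \<sigma> r" using injD[OF permutes_inj[OF sp]] by fastforce
    ultimately show "\<sigma> r < \<sigma> (Suc r)" by simp
  qed
qed

lemma des_class_antimono_on_col:
  assumes s: "\<sigma> \<in> des_class n S" and p: "p2 < p1" "p1 \<in> {1..n-1}" "p2 \<in> {1..n-1}"
    and e: "p1 - block_idx S p1 = p2 - block_idx S p2"
  shows "\<sigma> p1 < \<sigma> p2"
proof -
  have sp: "\<sigma> permutes {1..n}" and ld: "head_des n \<sigma> = S" using s by (auto simp: des_class_def)
  show ?thesis
  proof (rule greater_of_Suc_steps[OF _ p(1)])
    fix r assume r: "p2 \<le> r" "r < p1"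
    have rS: "r \<in> S"
    proof (rule ccontr)
      assume "r \<notin> S"
      then have us: "block_idx S (Suc r) = block_idx S r" using block_idx_Suc_S[of r] by simp
      have "block_idx S r \<le> r - 1" by (rule block_idx_le_pred)
      then have "r - block_idx S r < Suc r - block_idx S (Suc r)" using us r p by auto
      moreover have "p2 - block_idx S p2 \<le> r - block_idx S r" using col_mono[of p2 r] r p by auto
      moreover have "Suc r - block_idx S (Suc r) \<le> p1 - block_idx S p1" using col_mono[of "Suc r" p1] r by auto
      ultimately show False using e by simp
    qed
    then have "r \<in> head_des n \<sigma>" using ld by simp
    then show "\<sigma> (Suc r) < \<sigma> r" unfolding head_des_def by simp
  qed
qed

definition tab_perm :: "((nat \<times> nat) \<Rightarrow> nat) \<Rightarrow> nat \<Rightarrow> nat" where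
  "tab_perm T = (\<lambda>p. if p \<in> {1..n} then T (cell p) else p)"
definition perm_tab :: "(nat \<Rightarrow> nat) \<Rightarrow> (nat \<times> nat) \<Rightarrow> nat" where
  "perm_tab \<sigma> = (\<lambda>x. if x \<in> cells lam mu then \<sigma> (inv_into {1..n} cell x) else 0)"

lemma tab_perm_outside: "x \<notin> {1..n} \<Longrightarrow> tab_perm T x = x"
  unfolding tab_perm_def by (rule if_not_P)

lemma SYT_outside: "T \<in> SYT lam mu \<Longrightarrow> x \<notin> cells lam mu \<Longrightarrow> T x = 0"
  unfolding SYT_def by blast

lemma bij_betw_cell: "bij_betw cell {1..n} (cells lam mu)"
  using inj_on_cell cells_eq_image by (simp add: bij_betw_def)

lemma fst_cell_eq_0_iff: "p \<in> {1..n} \<Longrightarrow> fst (cell p) = 0 \<longleftrightarrow> p = n"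
proof -
  assume p: "p \<in> {1..n}"
  show ?thesis
  proof (cases "p = n")
    case True then show ?thesis using cell_n by simp
  next
    case False then show ?thesis using cell_less_n[OF False] block_idx_le_h[of p] by simp
  qed
qed

lemma fst_cell_antimono: "p \<in> {1..n} \<Longrightarrow> q \<in> {1..n} \<Longrightarrow> p \<le> q \<Longrightarrow> fst (cell q) \<le> fst (cell p)"
proof -
  assume p: "p \<in> {1..n}" and q: "q \<in> {1..n}" and pq: "p \<le> q"
  show ?thesis
  proof (cases "q = n")
    case True then show ?thesis using cell_n by simp
  next
    case False
    then have "p \<noteq> n" using pq q by auto
    then show ?thesis using cell_less_n[OF False] cell_less_n[of p] block_idx_mono_S[OF pq] by simp
  qed
qed

lemma cell_Suc_not_cut:
  assumes p: "p \<in> {1..n-2}" "p \<notin> S"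
  shows "fst (cell (Suc p)) = fst (cell p)" and "snd (cell p) < snd (cell (Suc p))"
proof -
  have "p \<noteq> n" "Suc p \<noteq> n" using p two_le_n by auto
  moreover have "block_idx S (Suc p) = block_idx S p" using block_idx_Suc_S[of p] p by simp
  moreover have "block_idx S p \<le> p - 1" by (rule block_idx_le_pred)
  ultimately show "fst (cell (Suc p)) = fst (cell p)" "snd (cell p) < snd (cell (Suc p))"
    using p by (auto simp: cell_less_n)
qed

lemma cell_Suc_cut:
  assumes p: "p \<in> S"
  shows "snd (cell (Suc p)) = snd (cell p)" and "fst (cell (Suc p)) < fst (cell p)"
proof -
  have "p \<in> {1..n-2}" using p S_subset by auto
  then have "p \<noteq> n" "Suc p \<noteq> n" using two_le_n by auto
  moreover have "block_idx S (Suc p) = Suc (block_idx S p)" using block_idx_Suc_S[of p] p by simp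
  moreover have "block_idx S (Suc p) \<le> h" by (rule block_idx_le_h)
  moreover have "block_idx S p \<le> p - 1" by (rule block_idx_le_pred)
  ultimately show "snd (cell (Suc p)) = snd (cell p)" "fst (cell (Suc p)) < fst (cell p)"
    using \<open>p \<in> {1..n-2}\<close> by (auto simp: cell_less_n)
qed

lemma des_class_row_increasing:
  assumes s: "\<sigma> \<in> des_class n S" and p: "p\<^sub>1 \<in> {1..n}" "p\<^sub>2 \<in> {1..n}"
    and row: "fst (cell p\<^sub>1) = fst (cell p\<^sub>2)" and col: "snd (cell p\<^sub>1) < snd (cell p\<^sub>2)"
  shows "\<sigma> p\<^sub>1 < \<sigma> p\<^sub>2"
proof -
  have "p\<^sub>1 = n \<longleftrightarrow> p\<^sub>2 = n" using row fst_cell_eq_0_iff[OF p(1)] fst_cell_eq_0_iff[OF p(2)] by metis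
  then have ne: "p\<^sub>1 \<noteq> n" "p\<^sub>2 \<noteq> n" using col by auto
  have "h + 1 - block_idx S p\<^sub>1 = h + 1 - block_idx S p\<^sub>2" using row cell_less_n[OF ne(1)] cell_less_n[OF ne(2)] by simp
  then have same: "block_idx S p\<^sub>1 = block_idx S p\<^sub>2" using block_idx_le_h[of p\<^sub>1] block_idx_le_h[of p\<^sub>2] by simp
  have "p\<^sub>1 - block_idx S p\<^sub>1 < p\<^sub>2 - block_idx S p\<^sub>1" using col cell_less_n[OF ne(1)] cell_less_n[OF ne(2)] same by simp
  then have "p\<^sub>1 < p\<^sub>2" using diff_le_mono[of p\<^sub>2 p\<^sub>1 "block_idx S p\<^sub>1"] by (meson not_le)
  then show ?thesis using des_class_mono_on_row[OF s _ p row] by simp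
qed

lemma des_class_col_increasing:
  assumes s: "\<sigma> \<in> des_class n S" and p: "p\<^sub>1 \<in> {1..n}" "p\<^sub>2 \<in> {1..n}"
    and col: "snd (cell p\<^sub>1) = snd (cell p\<^sub>2)" and row: "fst (cell p\<^sub>1) < fst (cell p\<^sub>2)"
  shows "\<sigma> p\<^sub>1 < \<sigma> p\<^sub>2"
proof -
  have "p\<^sub>2 \<noteq> n" using row cell_n by auto
  moreover have "p\<^sub>1 \<noteq> n"
  proof
    assume "p\<^sub>1 = n"
    then have "p\<^sub>2 - block_idx S p\<^sub>2 = n - h" using col cell_n cell_less_n[OF \<open>p\<^sub>2 \<noteq> n\<close>] by simp
    moreover have "p\<^sub>2 - block_idx S p\<^sub>2 \<le> n - 1 - h" using col_bound p(2) \<open>p\<^sub>2 \<noteq> n\<close> by auto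
    ultimately show False using h_le two_le_n by simp
  qed
  ultimately have "block_idx S p\<^sub>2 < block_idx S p\<^sub>1" "p\<^sub>1 - block_idx S p\<^sub>1 = p\<^sub>2 - block_idx S p\<^sub>2"
    using row col by (auto simp: cell_less_n)
  moreover from this(1) have "p\<^sub>2 < p\<^sub>1" using block_idx_mono_S[of p\<^sub>1 p\<^sub>2] by (meson not_le)
  ultimately show ?thesis
    using des_class_antimono_on_col[OF s] p \<open>p\<^sub>1 \<noteq> n\<close> \<open>p\<^sub>2 \<noteq> n\<close> by auto
qed

lemma tab_perm_des_class:
  assumes T: "T \<in> SYT lam mu"
  shows "tab_perm T \<in> des_class n S"
proof -
  have Tb: "bij_betw T (cells lam mu) {1..n}" using T card_cells_eq by (simp add: SYT_def)
  have T_mono: "\<And>x y. x \<in> cells lam mu \<Longrightarrow> y \<in> cells lam mu \<Longrightarrow>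
      (fst x = fst y \<and> snd x < snd y \<longrightarrow> T x < T y) \<and> (snd x = snd y \<and> fst x < fst y \<longrightarrow> T x < T y)"
    using T by (simp add: SYT_def)
  have "bij_betw (tab_perm T) {1..n} {1..n}"
    using bij_betw_trans[OF bij_betw_cell Tb] by (rule bij_betw_cong[THEN iffD1, rotated]) (simp add: tab_perm_def)
  then have perm: "tab_perm T permutes {1..n}"
    by (rule bij_imp_permutes) (rule tab_perm_outside)
  have "p \<in> head_des n (tab_perm T) \<longleftrightarrow> p \<in> S" if p: "p \<in> {1..n-2}" for p
  proof -
    have c: "cell p \<in> cells lam mu" "cell (Suc p) \<in> cells lam mu" using cell_in_cells p two_le_n by auto
    have "tab_perm T p = T (cell p)" "tab_perm T (Suc p) = T (cell (Suc p))"
      using p two_le_n by (auto simp: tab_perm_def)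
    moreover have "T (cell (Suc p)) < T (cell p) \<longleftrightarrow> p \<in> S"
    proof (cases "p \<in> S")
      case True
      then show ?thesis using T_mono[OF c(2) c(1)] cell_Suc_cut[OF True] by simp
    next
      case False
      then show ?thesis using T_mono[OF c] cell_Suc_not_cut[OF p False] by simp
    qed
    ultimately show ?thesis using p by (simp add: head_des_def)
  qed
  moreover have "head_des n (tab_perm T) \<subseteq> {1..n-2}" by (auto simp: head_des_def)
  ultimately have "head_des n (tab_perm T) = S" using S_subset by blast
  then show ?thesis using perm by (simp add: des_class_def)
qed

lemma perm_tab_cell: "p \<in> {1..n} \<Longrightarrow> perm_tab \<sigma> (cell p) = \<sigma> p"
  using cell_in_cells inv_into_f_f[OF inj_on_cell] by (simp add: perm_tab_def)

lemma perm_tab_SYT: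
  assumes s: "\<sigma> \<in> des_class n S"
  shows "perm_tab \<sigma> \<in> SYT lam mu" and "tab_perm (perm_tab \<sigma>) = \<sigma>"
proof -
  have sp: "\<sigma> permutes {1..n}" using s by (simp add: des_class_def)
  have "bij_betw (\<sigma> \<circ> inv_into {1..n} cell) (cells lam mu) {1..n}"
    using bij_betw_trans[OF bij_betw_inv_into[OF bij_betw_cell] permutes_imp_bij[OF sp]] .
  then have "bij_betw (perm_tab \<sigma>) (cells lam mu) {1..card (cells lam mu)}"
    unfolding card_cells_eq by (rule bij_betw_cong[THEN iffD1, rotated]) (simp add: perm_tab_def)
  moreover have "(fst x = fst y \<and> snd x < snd y \<longrightarrow> perm_tab \<sigma> x < perm_tab \<sigma> y) \<and>
      (snd x = snd y \<and> fst x < fst y \<longrightarrow> perm_tab \<sigma> x < perm_tab \<sigma> y)"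
    if "x \<in> cells lam mu" "y \<in> cells lam mu" for x y
    using that des_class_row_increasing[OF s] des_class_col_increasing[OF s] perm_tab_cell
    unfolding cells_eq_image by auto
  moreover have "perm_tab \<sigma> x = 0" if "x \<notin> cells lam mu" for x using that by (simp add: perm_tab_def)
  ultimately show "perm_tab \<sigma> \<in> SYT lam mu" unfolding SYT_def by blast
  show "tab_perm (perm_tab \<sigma>) = \<sigma>"
  proof
    fix p
    show "tab_perm (perm_tab \<sigma>) p = \<sigma> p"
      using perm_tab_cell tab_perm_outside permutes_not_in[OF sp] by (cases "p \<in> {1..n}") (auto simp: tab_perm_def)
  qed
qed

lemma inj_on_tab_perm: "inj_on tab_perm (SYT lam mu)"
proof (rule inj_onI)
  fix T1 T2 assume t1: "T1 \<in> SYT lam mu" and t2: "T2 \<in> SYT lam mu" and e: "tab_perm T1 = tab_perm T2"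
  show "T1 = T2"
  proof
    fix x show "T1 x = T2 x"
    proof (cases "x \<in> cells lam mu")
      case True
      then obtain p where p: "p \<in> {1..n}" "x = cell p" using cells_eq_image by auto
      have "tab_perm T1 p = tab_perm T2 p" using e by simp
      then show ?thesis using p by (simp add: tab_perm_def)
    next
      case False then show ?thesis using SYT_outside[OF t1 False] SYT_outside[OF t2 False] by simp
    qed
  qed
qed

lemma bij_betw_tab_perm: "bij_betw tab_perm (SYT lam mu) (des_class n S)"
proof -
  have "tab_perm ` SYT lam mu = des_class n S"
  proof
    show "tab_perm ` SYT lam mu \<subseteq> des_class n S" using tab_perm_des_class by auto
    show "des_class n S \<subseteq> tab_perm ` SYT lam mu"
    proof
      fix \<sigma> assume s: "\<sigma> \<in> des_class n S"
      then show "\<sigma> \<in> tab_perm ` SYT lam mu" using perm_tab_SYT[OF s] by (metis image_eqI)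
    qed
  qed
  then show ?thesis using inj_on_tab_perm by (simp add: bij_betw_def)
qed

lemma des_class_fst_cell_less_iff:
  assumes s: "\<sigma> \<in> des_class n S" and a: "a \<in> {1..n}" and b: "b \<in> {1..n}" and less: "\<sigma> a < \<sigma> b"
  shows "fst (cell a) < fst (cell b) \<longleftrightarrow> b < a"
proof
  assume "fst (cell a) < fst (cell b)"
  then show "b < a" using fst_cell_antimono[OF a b] by (meson not_le)
next
  assume "b < a"
  then have "fst (cell a) \<le> fst (cell b)" using fst_cell_antimono[OF b a] by simp
  moreover have "fst (cell a) \<noteq> fst (cell b)" using des_class_mono_on_row[OF s \<open>b < a\<close> b a] less by auto
  ultimately show "fst (cell a) < fst (cell b)" by simp
qed

lemma tab_Des_eq_inv_des:
  assumes T: "T \<in> SYT lam mu"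
  shows "tab_Des lam mu T = inv_des n (tab_perm T)"
proof -
  define \<sigma> where "\<sigma> = tab_perm T"
  have s: "\<sigma> \<in> des_class n S" using tab_perm_des_class[OF T] by (simp add: \<sigma>_def)
  have sp: "\<sigma> permutes {1..n}" using s by (simp add: des_class_def)
  have Tinj: "inj_on T (cells lam mu)" using T by (simp add: SYT_def bij_betw_def)
  have key: "(\<exists>x\<in>cells lam mu. \<exists>y\<in>cells lam mu. T x = i \<and> T y = i + 1 \<and> fst x < fst y)
      \<longleftrightarrow> inv \<sigma> (Suc i) < inv \<sigma> i" if i: "i \<in> {1..n-1}" for i
  proof -
    define a b where "a = inv \<sigma> i" and "b = inv \<sigma> (Suc i)"
    have ab: "a \<in> {1..n}" "\<sigma> a = i" "b \<in> {1..n}" "\<sigma> b = Suc i"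
      using i permutes_inv_imp_mem[OF sp] permutes_inverses(1)[OF sp] by (auto simp: a_def b_def)
    then have T_ab: "T (cell a) = i" "T (cell b) = Suc i" by (simp_all add: \<sigma>_def tab_perm_def)
    have cells: "cell a \<in> cells lam mu" "cell b \<in> cells lam mu" using cell_in_cells ab by auto
    have "(\<exists>x\<in>cells lam mu. \<exists>y\<in>cells lam mu. T x = i \<and> T y = i + 1 \<and> fst x < fst y)
        \<longleftrightarrow> fst (cell a) < fst (cell b)"
    proof
      assume "\<exists>x\<in>cells lam mu. \<exists>y\<in>cells lam mu. T x = i \<and> T y = i + 1 \<and> fst x < fst y"
      then obtain x y where xy: "x \<in> cells lam mu" "y \<in> cells lam mu" "T x = i" "T y = Suc i" "fst x < fst y"
        by auto
      have "x = cell a" using inj_onD[OF Tinj _ xy(1) cells(1)] xy(3) T_ab(1) by simp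
      moreover have "y = cell b" using inj_onD[OF Tinj _ xy(2) cells(2)] xy(4) T_ab(2) by simp
      ultimately show "fst (cell a) < fst (cell b)" using xy(5) by simp
    next
      assume "fst (cell a) < fst (cell b)"
      then show "\<exists>x\<in>cells lam mu. \<exists>y\<in>cells lam mu. T x = i \<and> T y = i + 1 \<and> fst x < fst y"
        using T_ab cells by auto
    qed
    also have "\<dots> \<longleftrightarrow> b < a" using des_class_fst_cell_less_iff[OF s] ab by simp
    finally show ?thesis by (simp add: a_def b_def)
  qed
  show ?thesis unfolding tab_Des_def inv_des_def card_cells_eq \<sigma>_def[symmetric]
  proof (intro Collect_cong conj_cong refl)
    fix i assume "i \<in> {1..n-1}"
    then show "(\<exists>x\<in>cells lam mu. \<exists>y\<in>cells lam mu. T x = i \<and> T y = i + 1 \<and> fst x < fst y)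
        = (inv \<sigma> (Suc i) < inv \<sigma> i)" by (rule key)
  qed
qed

lemma finite_SYT: "finite (SYT lam mu)"
  using bij_betw_finite[OF bij_betw_tab_perm] finite_permutes_atLeastAtMost by (simp add: des_class_def)

lemma image_mset_tab_Des_SYT:
  "image_mset (tab_Des lam mu) (mset_set (SYT lam mu)) = image_mset (inv_des n) (mset_set (des_class n S))"
proof -
  have "image_mset (tab_Des lam mu) (mset_set (SYT lam mu))
      = image_mset (inv_des n) (mset_set (tab_perm ` SYT lam mu))"
    by (rule image_mset_mset_set_inj_on_comp) (simp_all add: finite_SYT inj_on_tab_perm tab_Des_eq_inv_des)
  also have "tab_perm ` SYT lam mu = des_class n S" using bij_betw_tab_perm by (simp add: bij_betw_def)
  finally show ?thesis .
qed

lemma not_connected_ribbon: "\<not> connected_ribbon lam mu"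
proof
  assume cr: "connected_ribbon lam mu"
  define R where "R = (\<lambda>x y. x \<in> cells lam mu \<and> y \<in> cells lam mu \<and> adjacent x y)"
  have one: "(1::nat) \<in> {1..n}" "n \<in> {1..n}" using two_le_n by auto
  have "R\<^sup>*\<^sup>* (cell 1) (cell n)" using cr cell_in_cells[OF one(1)] cell_in_cells[OF one(2)]
    unfolding connected_ribbon_def R_def by blast
  moreover have "R\<^sup>*\<^sup>* (cell 1) y \<Longrightarrow> y \<in> cell ` {1..n-1}" for y
  proof (induction rule: rtranclp_induct)
    case base then show ?case using two_le_n by auto
  next
    case (step y z)
    obtain p where p: "p \<in> {1..n-1}" "y = cell p" using step.IH by auto
    have zc: "z \<in> cells lam mu" "adjacent y z" using step.hyps(2) unfolding R_def by auto
    obtain q where q: "q \<in> {1..n}" "z = cell q" using zc(1) cells_eq_image by auto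
    have "q \<noteq> n"
    proof
      assume "q = n"
      then have z: "z = (0, n - h)" using q cell_n by simp
      have pn: "p \<noteq> n" using p two_le_n by auto
      have y: "fst y = h + 1 - block_idx S p" "snd y = p - block_idx S p" using p cell_less_n[OF pn] by auto
      have "1 \<le> fst y" using y block_idx_le_h[of p] by simp
      moreover have "snd y \<le> n - 1 - h" using y col_bound[OF p(1)] by simp
      ultimately show False using zc(2) z h_le two_le_n unfolding adjacent_def by auto
    qed
    then show ?case using q by auto
  qed
  ultimately have "cell n \<in> cell ` {1..n-1}" by blast
  then obtain p where "p \<in> {1..n-1}" "cell n = cell p" by auto
  then have "n = p" using inj_onD[OF inj_on_cell] one(2) by force
  then show False using \<open>p \<in> {1..n-1}\<close> two_le_n by simp
qed

lemma block_end_image: "block_end ` {1..h} = S"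
proof (intro set_eqI iffI)
  fix q assume "q \<in> block_end ` {1..h}"
  then obtain t where t: "t \<in> {1..h}" "q = block_end t" by auto
  have "t \<le> n - 1" using t h_le by auto
  then have "t \<le> block_end t" by (rule block_end_ge)
  moreover have "n - 1 \<in> {1..n-1}" using two_le_n by simp
  then have "\<not> n - 1 \<le> block_end t" using block_end_iff[of "n - 1" t] block_idx_top[of "n-1"] t by simp
  ultimately have q: "q \<in> {1..n-1}" "Suc q \<in> {1..n-1}" using t by auto
  have lt: "block_idx S q < t" using block_end_iff[OF q(1), of t] t by simp
  have ge: "\<not> block_idx S (Suc q) < t" using block_end_iff[OF q(2), of t] t by simp
  show "q \<in> S"
  proof (rule ccontr)
    assume "q \<notin> S"
    then have "block_idx S (Suc q) = block_idx S q" using block_idx_Suc_S[of q] by simp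
    then show False using lt ge by simp
  qed
next
  fix q assume "q \<in> S"
  then have "q \<in> {1..n-2}" using S_subset by blast
  then have q: "q \<in> {1..n-1}" "Suc q \<in> {1..n-1}" by auto
  define t where "t = Suc (block_idx S q)"
  have t: "block_idx S (Suc q) = t" using block_idx_Suc_S[of q] \<open>q \<in> S\<close> by (simp add: t_def)
  have "q \<le> block_end t" "\<not> Suc q \<le> block_end t"
    using block_end_iff[OF q(1), of t] block_end_iff[OF q(2), of t] t by (simp_all add: t_def)
  then have "q = block_end t" by simp
  moreover have "t \<in> {1..h}" using t block_idx_le_h[of "Suc q"] by (simp add: t_def)
  ultimately show "q \<in> block_end ` {1..h}" by (rule image_eqI)
qed

text \<open>The set \<open>S\<close> can be read off the shape.\<close>

lemma cuts_eq: "(\<lambda>t. part_at mu (length lam - 1 - t) + t - 1) ` {1..length lam - 2} = S"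
proof -
  have "(\<lambda>t. part_at mu (length lam - 1 - t) + t - 1) ` {1..length lam - 2}
      = (\<lambda>t. part_at mu (h + 1 - t) + t - 1) ` {1..h}"
    by (simp add: len_lam)
  also have "\<dots> = block_end ` {1..h}"
  proof (rule image_cong[OF refl])
    fix t assume t: "t \<in> {1..h}"
    have "t \<le> n - 1" using t h_le by auto
    then have "t \<le> block_end t" by (rule block_end_ge)
    then show "part_at mu (h + 1 - t) + t - 1 = block_end t" using t by (simp add: part_at_mu mu_row_def)
  qed
  finally show ?thesis using block_end_image by simp
qed

lemma ribbon_cyclic_descent_ext:
  "\<exists>cD \<psi>. cyclic_descent_ext n (SYT lam mu) (tab_Des lam mu) cD \<psi> \<and>
     image_mset cD (mset_set (SYT lam mu)) = image_mset (\<lambda>\<sigma>. perm_cDes n (inv \<sigma>)) (mset_set (rot_des_class n S))"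
proof (rule cyclic_descent_ext_from_shift_invariant[OF finite_SYT])
  show "finite (rot_des_class n S)" unfolding rot_des_class_def by (rule finite_permutes_atLeastAtMost)
  show "image_mset (cshift n \<circ> (\<lambda>\<sigma>. perm_cDes n (inv \<sigma>))) (mset_set (rot_des_class n S))
      = image_mset (\<lambda>\<sigma>. perm_cDes n (inv \<sigma>)) (mset_set (rot_des_class n S))"
    by (rule image_mset_cshift_rot_des_class[OF two_le_n])
  show "perm_cDes n (inv \<sigma>) \<subseteq> {1..n} \<and> perm_cDes n (inv \<sigma>) \<noteq> {} \<and> perm_cDes n (inv \<sigma>) \<noteq> {1..n}"
    if "\<sigma> \<in> rot_des_class n S" for \<sigma>
    using perm_cDes_inv_proper[OF two_le_n] that by (simp add: rot_des_class_def)
  have "image_mset (\<lambda>\<sigma>. perm_cDes n (inv \<sigma>) \<inter> {1..n-1}) (mset_set (rot_des_class n S))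
      = image_mset (inv_des n) (mset_set (rot_des_class n S))"
    by (rule image_mset_cong) (rule perm_cDes_inv_restrict)
  also have "\<dots> = image_mset (tab_Des lam mu) (mset_set (SYT lam mu))"
    using image_mset_inv_des_des_class[OF two_le_n S_subset] image_mset_tab_Des_SYT by simp
  finally show "image_mset (\<lambda>\<sigma>. perm_cDes n (inv \<sigma>) \<inter> {1..n-1}) (mset_set (rot_des_class n S))
      = image_mset (tab_Des lam mu) (mset_set (SYT lam mu))" .
qed

end

lemma inj_on_ribbon_shape:
  assumes "2 \<le> n"
  shows "inj_on (\<lambda>S. (ribbon_with_cell.lam n S, ribbon_with_cell.mu n S)) {S. S \<subseteq> {1..n-2}}"
proof (rule inj_onI)
  fix S\<^sub>1 S\<^sub>2 assume "S\<^sub>1 \<in> {S. S \<subseteq> {1..n-2}}" "S\<^sub>2 \<in> {S. S \<subseteq> {1..n-2}}"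
    and "(ribbon_with_cell.lam n S\<^sub>1, ribbon_with_cell.mu n S\<^sub>1) = (ribbon_with_cell.lam n S\<^sub>2, ribbon_with_cell.mu n S\<^sub>2)"
  then show "S\<^sub>1 = S\<^sub>2"
    using ribbon_with_cell.cuts_eq[of n S\<^sub>1] ribbon_with_cell.cuts_eq[of n S\<^sub>2] assms
    by (simp add: ribbon_with_cell_def)
qed

theorem corollary3p12:
  fixes n k :: nat
  assumes "1 \<le> k" and "k < n"
  shows "cyclic_Schur_positive n (C_set n k)"
proof -
  have n: "2 \<le> n" using assms by simp
  let ?I = "{S. S \<subseteq> {1..n-2} \<and> card S = k - 1}"
  let ?shape = "\<lambda>S. (ribbon_with_cell.lam n S, ribbon_with_cell.mu n S)"
  let ?M = "\<lambda>S. image_mset (\<lambda>\<sigma>. perm_cDes n (inv \<sigma>)) (mset_set (rot_des_class n S))"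
  have ribbon: "ribbon_with_cell n S" if "S \<in> ?I" for S
    using that n by unfold_locales auto
  show ?thesis
  proof (rule cyclic_Schur_positive_sum[where I = ?I and shape = ?shape and M = ?M])
    show "finite ?I" by (rule finite_subset[of _ "Pow {1..n-2}"]) auto
    show "inj_on ?shape ?I" using inj_on_ribbon_shape[OF n] by (rule inj_on_subset) auto
    show "image_mset (perm_cDes n) (mset_set (C_set n k)) = (\<Sum>S\<in>?I. ?M S)"
      by (rule image_mset_perm_cDes_C_set[OF n assms(1)])
  qed (use ribbon_with_cell.skew_shape_lam_mu[OF ribbon] ribbon_with_cell.card_cells_eq[OF ribbon]
      ribbon_with_cell.not_connected_ribbon[OF ribbon] ribbon_with_cell.ribbon_cyclic_descent_ext[OF ribbon]
    in auto)
qed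

end
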